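(* Let $R$ be a commutative local ring whose maximal ideal $\mathfrak{m}$ is principal with $\mathfrak{m}^2 = 0$, and fix a generator $r$ of $\mathfrak{m}$. Let $X$ be a perfect chain complex over $R$. Then there is an isomorphism of chain complexes $X \cong P \oplus Q$, where $P$ is acyclic and $Q$ is isomorphic to a finite direct sum of complexes of the form $\Sigma^i E_j$ with $i, j \geq 0$.
   Context: Chain complexes are non-negatively graded chain complexes of $R$-modules, with differentials lowering degree. A chain complex is perfect if it consists of projective modules in each degree and $\bigoplus_i X_i$ is finitely generated. Acyclic means all homology groups vanish. For integers $i, j \geq 0$, $\Sigma^i E_j$ is the complex with $(\Sigma^i E_j)_n = R$ for $i \leq n \leq i+j$ and $0$ otherwise, with every differential $R \to R$ given by multiplication by $(-1)^i r$ (the isomorphism type does not depend on the choice of $r$). In particular $E_j = \Sigma^0 E_j$ has $R$ in degrees $0, \dots, j$ with differentials multiplication by $r$. *)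

theory Defs
  imports Complex_Main "HOL-Library.Function_Algebras"
begin

definition is_ideal :: "'a::comm_ring_1 set \<Rightarrow> bool" where
  "is_ideal I \<longleftrightarrow> 0 \<in> I \<and> (\<forall>x\<in>I. \<forall>y\<in>I. x + y \<in> I) \<and> (\<forall>a. \<forall>x\<in>I. a * x \<in> I)"

definition maximal_ideal :: "'a::comm_ring_1 set \<Rightarrow> bool" where
  "maximal_ideal M \<longleftrightarrow> is_ideal M \<and> M \<noteq> UNIV \<and>
     (\<forall>J. is_ideal J \<and> M \<subseteq> J \<longrightarrow> J = M \<or> J = UNIV)"

definition linear_on :: "('a::comm_ring_1 \<Rightarrow> 'm::ab_group_add \<Rightarrow> 'm) \<Rightarrow>
    ('a \<Rightarrow> 'n::ab_group_add \<Rightarrow> 'n) \<Rightarrow> 'm set \<Rightarrow> ('m \<Rightarrow> 'n) \<Rightarrow> bool" where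
  "linear_on s1 s2 S f \<longleftrightarrow> (\<forall>x\<in>S. \<forall>y\<in>S. f (x + y) = f x + f y) \<and>
     (\<forall>c. \<forall>x\<in>S. f (s1 c x) = s2 c (f x))"

definition fin_gen :: "('a::comm_ring_1 \<Rightarrow> 'm::ab_group_add \<Rightarrow> 'm) \<Rightarrow> 'm set \<Rightarrow> bool" where
  "fin_gen s M \<longleftrightarrow> (\<exists>G. finite G \<and> G \<subseteq> M \<and> module.span s G = M)"

text \<open>Projective module: a direct summand of a free module. Concretely, the canonical
  surjection from the free module on the elements of M (finitely supported functions
  M \<Rightarrow> R) onto M, f \<mapsto> sum of f(m) m, admits an R-linear section.\<close>
definition projective_mod :: "('a::comm_ring_1 \<Rightarrow> 'm::ab_group_add \<Rightarrow> 'm) \<Rightarrow> 'm set \<Rightarrow> bool" where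
  "projective_mod s M \<longleftrightarrow> module.subspace s M \<and>
     (\<exists>sec :: 'm \<Rightarrow> 'm \<Rightarrow> 'a.
        linear_on s (\<lambda>c f. \<lambda>m. c * f m) M sec \<and>
        (\<forall>x\<in>M. finite {m. sec x m \<noteq> 0} \<and> {m. sec x m \<noteq> 0} \<subseteq> M \<and>
                 (\<Sum>m\<in>{m. sec x m \<noteq> 0}. s (sec x m) m) = x))"

text \<open>A non-negatively graded chain complex inside an ambient module:
  X n is the module in degree n, d n : X (n+1) \<rightarrow> X n is the differential.\<close>
definition chain_complex :: "('a::comm_ring_1 \<Rightarrow> 'm::ab_group_add \<Rightarrow> 'm) \<Rightarrow>
    (nat \<Rightarrow> 'm set) \<Rightarrow> (nat \<Rightarrow> 'm \<Rightarrow> 'm) \<Rightarrow> bool" where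
  "chain_complex s X d \<longleftrightarrow> module s \<and> (\<forall>n. module.subspace s (X n)) \<and>
     (\<forall>n. \<forall>x\<in>X (Suc n). d n x \<in> X n) \<and>
     (\<forall>n. linear_on s s (X (Suc n)) (d n)) \<and>
     (\<forall>n. \<forall>x\<in>X (Suc (Suc n)). d n (d (Suc n) x) = 0)"

text \<open>Perfect: projective in each degree and the direct sum of all X n is finitely
  generated (i.e. each X n is finitely generated and almost all X n vanish).\<close>
definition perfect_complex :: "('a::comm_ring_1 \<Rightarrow> 'm::ab_group_add \<Rightarrow> 'm) \<Rightarrow>
    (nat \<Rightarrow> 'm set) \<Rightarrow> (nat \<Rightarrow> 'm \<Rightarrow> 'm) \<Rightarrow> bool" where
  "perfect_complex s X d \<longleftrightarrow> chain_complex s X d \<and> (\<forall>n. projective_mod s (X n)) \<and>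
     (\<forall>n. fin_gen s (X n)) \<and> (\<exists>N. \<forall>n\<ge>N. X n = {0})"

definition cycles :: "(nat \<Rightarrow> 'm set) \<Rightarrow> (nat \<Rightarrow> 'm \<Rightarrow> 'm::zero) \<Rightarrow> nat \<Rightarrow> 'm set" where
  "cycles X d n = (if n = 0 then X 0 else {x \<in> X n. d (n - 1) x = 0})"

definition chain_acyclic :: "(nat \<Rightarrow> 'm set) \<Rightarrow> (nat \<Rightarrow> 'm \<Rightarrow> 'm::zero) \<Rightarrow> bool" where
  "chain_acyclic X d \<longleftrightarrow> (\<forall>n. cycles X d n \<subseteq> d n ` X (Suc n))"

definition subcomplex :: "('a::comm_ring_1 \<Rightarrow> 'm::ab_group_add \<Rightarrow> 'm) \<Rightarrow>
    (nat \<Rightarrow> 'm set) \<Rightarrow> (nat \<Rightarrow> 'm set) \<Rightarrow> (nat \<Rightarrow> 'm \<Rightarrow> 'm) \<Rightarrow> bool" where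
  "subcomplex s P X d \<longleftrightarrow> (\<forall>n. module.subspace s (P n) \<and> P n \<subseteq> X n) \<and>
     (\<forall>n. d n ` P (Suc n) \<subseteq> P n)"

text \<open>X is the (internal) direct sum of the subcomplexes P and Q; this is the same as an
  isomorphism of chain complexes X \<cong> P \<oplus> Q (with the restricted differentials).\<close>
definition complex_direct_sum :: "('a::comm_ring_1 \<Rightarrow> 'm::ab_group_add \<Rightarrow> 'm) \<Rightarrow>
    (nat \<Rightarrow> 'm set) \<Rightarrow> (nat \<Rightarrow> 'm \<Rightarrow> 'm) \<Rightarrow> (nat \<Rightarrow> 'm set) \<Rightarrow> (nat \<Rightarrow> 'm set) \<Rightarrow> bool" where
  "complex_direct_sum s X d P Q \<longleftrightarrow> subcomplex s P X d \<and> subcomplex s Q X d \<and>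
     (\<forall>n. P n \<inter> Q n = {0} \<and> {p + q | p q. p \<in> P n \<and> q \<in> Q n} = X n)"

definition chain_iso :: "('a::comm_ring_1 \<Rightarrow> 'm::ab_group_add \<Rightarrow> 'm) \<Rightarrow>
    (nat \<Rightarrow> 'm set) \<Rightarrow> (nat \<Rightarrow> 'm \<Rightarrow> 'm) \<Rightarrow>
    ('a \<Rightarrow> 'n::ab_group_add \<Rightarrow> 'n) \<Rightarrow> (nat \<Rightarrow> 'n set) \<Rightarrow> (nat \<Rightarrow> 'n \<Rightarrow> 'n) \<Rightarrow> bool" where
  "chain_iso s1 X dX s2 Y dY \<longleftrightarrow> (\<exists>\<phi> :: nat \<Rightarrow> 'm \<Rightarrow> 'n.
     (\<forall>n. bij_betw (\<phi> n) (X n) (Y n) \<and> linear_on s1 s2 (X n) (\<phi> n)) \<and>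
     (\<forall>n. \<forall>x\<in>X (Suc n). \<phi> n (dX n x) = dY n (\<phi> (Suc n) x)))"

text \<open>The ambient module is R^\<nat> = (nat \<Rightarrow> 'a) with pointwise scalar multiplication.\<close>
definition fscale :: "'a::comm_ring_1 \<Rightarrow> (nat \<Rightarrow> 'a) \<Rightarrow> (nat \<Rightarrow> 'a)" where
  "fscale c f = (\<lambda>k. c * f k)"

text \<open>The direct sum of \<Sigma>^(ii k) E_(jj k) for k < N: in degree n, the k-th summand is R if
  ii k \<le> n \<le> ii k + jj k and 0 otherwise.\<close>
definition sumE_mod :: "nat \<Rightarrow> (nat \<Rightarrow> nat) \<Rightarrow> (nat \<Rightarrow> nat) \<Rightarrow> nat \<Rightarrow> (nat \<Rightarrow> 'a::comm_ring_1) set" where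
  "sumE_mod N ii jj n = {f. \<forall>k. f k \<noteq> 0 \<longrightarrow> k < N \<and> ii k \<le> n \<and> n \<le> ii k + jj k}"

text \<open>Differential from degree n+1 to degree n: on the k-th summand it is multiplication by
  (-1)^(ii k) * r when both degrees lie in the range of that summand, and 0 otherwise.\<close>
definition sumE_diff :: "'a::comm_ring_1 \<Rightarrow> (nat \<Rightarrow> nat) \<Rightarrow> nat \<Rightarrow> (nat \<Rightarrow> 'a) \<Rightarrow> (nat \<Rightarrow> 'a)" where
  "sumE_diff r ii n f = (\<lambda>k. if ii k \<le> n then (-1) ^ (ii k) * r * f k else 0)"

end

theory Submission
  imports Defs
begin

text \<open>Since \<open>m\<close> is maximal with \<open>m\<^sup>2 = 0\<close>, every element outside \<open>m = (r)\<close> is a unit, and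
  finitely generated projective modules have finite dual bases, whose size serves as a rank. Strands
  are split off one at a time, each lowering the total rank. If some \<open>d y\<close> is not divisible by \<open>r\<close>,
  a functional \<open>\<pi>\<close> with \<open>\<pi> (d y) = 1\<close> splits off the acyclic complex \<open>R y \<rightarrow> R (d y)\<close>. Otherwise
  the complex is minimal, \<open>d X \<subseteq> r X\<close>: start with \<open>x\<^sub>0\<close> not divisible by \<open>r\<close> in the lowest nonzero
  degree \<open>i\<close> and a functional \<open>\<Phi>\<^sub>0\<close> with \<open>\<Phi>\<^sub>0 x\<^sub>0 = 1\<close>, divide by \<open>\<plusminus>r\<close> to obtain functionals
  with \<open>\<Phi>\<^sub>l \<circ> d = \<plusminus>r \<Phi>\<^bsub>l+1\<^esub>\<close>, and follow a longest chain \<open>d x\<^bsub>l+1\<^esub> = \<plusminus>r x\<^sub>l\<close> along which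
  \<open>\<Phi>\<^sub>l x\<^sub>l\<close> stays a unit. The vectors \<open>x\<^sub>l\<close> span a copy of \<open>\<Sigma>\<^sup>i E\<^sub>j\<close>, and the kernels of the
  \<open>\<Phi>\<^sub>l\<close> form a complementary subcomplex.\<close>

section \<open>The ring\<close>

locale sq_zero_principal_maximal =
  fixes mm :: "'a::comm_ring_1 set" and r :: 'a
  assumes maximal: "maximal_ideal mm"
    and principal: "mm = {r * a | a. True}"
    and sq_zero: "\<forall>x\<in>mm. \<forall>y\<in>mm. x * y = 0"
begin

lemma mem_mm_iff: "x \<in> mm \<longleftrightarrow> (\<exists>a. x = r * a)"
  using principal by auto

lemma r_mem_mm: "r \<in> mm"
  unfolding mem_mm_iff by (metis mult_1_right)

lemma zero_mem_mm: "0 \<in> mm"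
  unfolding mem_mm_iff by (metis mult_zero_right)

lemma r_mult_mm: "x \<in> mm \<Longrightarrow> r * x = 0"
  using sq_zero r_mem_mm by auto

lemma add_mem_mm: "x \<in> mm \<Longrightarrow> y \<in> mm \<Longrightarrow> x + y \<in> mm"
  unfolding mem_mm_iff by (metis distrib_left)

lemma mult_mem_mm: "x \<in> mm \<Longrightarrow> y * x \<in> mm"
  unfolding mem_mm_iff by (metis mult.left_commute)

lemma diff_mem_mm: "x \<in> mm \<Longrightarrow> y \<in> mm \<Longrightarrow> x - y \<in> mm"
  unfolding mem_mm_iff by (metis right_diff_distrib)

lemma sum_mem_mm: "(\<And>i. i \<in> I \<Longrightarrow> f i \<in> mm) \<Longrightarrow> sum f I \<in> mm"
  by (induct I rule: infinite_finite_induct) (auto simp: zero_mem_mm add_mem_mm)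

lemma one_notin_mm: "1 \<notin> mm"
proof
  assume "1 \<in> mm"
  then have "mm = UNIV" using mult_mem_mm[of 1] by auto
  then show False using maximal unfolding maximal_ideal_def by auto
qed

text \<open>Since the maximal ideal is nilpotent, the ring is local: writing \<open>1 = x + a y\<close> with
  \<open>x \<in> mm\<close>, the inverse of \<open>a\<close> is \<open>y (1 + x)\<close>.\<close>
lemma unit_if_notin_mm:
  assumes "a \<notin> mm"
  obtains b where "a * b = 1"
proof -
  define J where "J = {x + a * y | x y. x \<in> mm}"
  have "is_ideal J"
    unfolding is_ideal_def J_def
  proof (intro conjI ballI allI)
    show "0 \<in> {x + a * y |x y. x \<in> mm}"
      using zero_mem_mm by (intro CollectI exI[of _ 0] exI[of _ 0]) simp
  next
    fix u v assume "u \<in> {x + a * y |x y. x \<in> mm}" "v \<in> {x + a * y |x y. x \<in> mm}"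
    then obtain x y x' y' where "u = x + a * y" "v = x' + a * y'" "x \<in> mm" "x' \<in> mm" by auto
    then show "u + v \<in> {x + a * y |x y. x \<in> mm}"
      by (intro CollectI exI[of _ "x + x'"] exI[of _ "y + y'"]) (auto simp: add_mem_mm algebra_simps)
  next
    fix c u assume "u \<in> {x + a * y |x y. x \<in> mm}"
    then obtain x y where "u = x + a * y" "x \<in> mm" by auto
    then show "c * u \<in> {x + a * y |x y. x \<in> mm}"
      by (intro CollectI exI[of _ "c * x"] exI[of _ "c * y"]) (auto simp: mult_mem_mm algebra_simps)
  qed
  moreover have "mm \<subseteq> J"
    unfolding J_def by (metis (mono_tags, lifting) CollectI add.right_neutral mult_zero_right subsetI)
  moreover have "a \<in> J"
    unfolding J_def using zero_mem_mm by (intro CollectI exI[of _ 0] exI[of _ 1]) simp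
  ultimately have "J = UNIV"
    using maximal assms unfolding maximal_ideal_def by blast
  then obtain x y where xy: "1 = x + a * y" "x \<in> mm"
    unfolding J_def by blast
  have "a * y = 1 - x"
    using xy(1) by (simp add: algebra_simps)
  then have "a * (y * (1 + x)) = (1 - x) * (1 + x)"
    by (metis mult.assoc)
  also have "\<dots> = 1 - x * x"
    by (simp add: algebra_simps)
  also have "\<dots> = 1"
    using sq_zero xy(2) by simp
  finally show ?thesis by (rule that)
qed

lemma mem_mm_if_r_mult_eq_0:
  assumes "r \<noteq> 0" "r * a = 0" shows "a \<in> mm"
proof (rule ccontr)
  assume "a \<notin> mm"
  then obtain b where "a * b = 1" by (rule unit_if_notin_mm)
  then have "r = r * a * b" by (simp add: mult.assoc)
  then show False using assms by simp
qed

end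

section \<open>Linear maps and functionals\<close>

lemma module_times: "module ((*) :: 'a::comm_ring_1 \<Rightarrow> 'a \<Rightarrow> 'a)"
  by unfold_locales (auto simp: algebra_simps)

lemma linear_on_add: "linear_on s1 s2 S f \<Longrightarrow> x \<in> S \<Longrightarrow> y \<in> S \<Longrightarrow> f (x + y) = f x + f y"
  unfolding linear_on_def by blast

lemma linear_on_scale: "linear_on s1 s2 S f \<Longrightarrow> x \<in> S \<Longrightarrow> f (s1 c x) = s2 c (f x)"
  unfolding linear_on_def by blast

lemma linear_on_subset: "linear_on s1 s2 S f \<Longrightarrow> T \<subseteq> S \<Longrightarrow> linear_on s1 s2 T f"
  unfolding linear_on_def by blast

lemma linear_on_mult_left:
  "linear_on s1 (*) S f \<Longrightarrow> linear_on s1 (*) S (\<lambda>x. a * f x)"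
  unfolding linear_on_def by (simp add: algebra_simps)

context
  fixes s1 :: "'a::comm_ring_1 \<Rightarrow> 'm::ab_group_add \<Rightarrow> 'm" and s2 :: "'a \<Rightarrow> 'n::ab_group_add \<Rightarrow> 'n"
  assumes m1: "module s1" and m2: "module s2"
begin

interpretation m1: module s1 by (rule m1)
interpretation m2: module s2 by (rule m2)

lemma linear_on_zero: "m1.subspace S \<Longrightarrow> linear_on s1 s2 S f \<Longrightarrow> f 0 = 0"
  using linear_on_scale[of s1 s2 S f 0 0] m1.subspace_0 by simp

lemma linear_on_neg: "m1.subspace S \<Longrightarrow> linear_on s1 s2 S f \<Longrightarrow> x \<in> S \<Longrightarrow> f (- x) = - f x"
  using linear_on_scale[of s1 s2 S f x "-1"] by simp

lemma linear_on_diff: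
  "m1.subspace S \<Longrightarrow> linear_on s1 s2 S f \<Longrightarrow> x \<in> S \<Longrightarrow> y \<in> S \<Longrightarrow> f (x - y) = f x - f y"
  using linear_on_add[of s1 s2 S f x "- y"] linear_on_neg[of S f y] m1.subspace_neg by simp

lemma linear_on_sum:
  assumes "m1.subspace S" "linear_on s1 s2 S f" "\<And>i. i \<in> I \<Longrightarrow> g i \<in> S"
  shows "f (sum g I) = (\<Sum>i\<in>I. f (g i))"
  using assms(3)
proof (induct I rule: infinite_finite_induct)
  case (insert i I)
  then show ?case
    using linear_on_add[OF assms(2), of "g i" "sum g I"] m1.subspace_sum[OF assms(1), of I g] by simp
qed (use linear_on_zero[OF assms(1,2)] in simp_all)

end

section \<open>Dual bases\<close>

text \<open>A dual basis of \<open>M\<close> indexed by \<open>G\<close> exhibits \<open>M\<close> as a direct summand of \<open>R\<^sup>G\<close>.\<close>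
definition dual_basis :: "('a::comm_ring_1 \<Rightarrow> 'm::ab_group_add \<Rightarrow> 'm) \<Rightarrow> 'm set \<Rightarrow> 'g set \<Rightarrow>
    ('g \<Rightarrow> 'm) \<Rightarrow> ('m \<Rightarrow> 'g \<Rightarrow> 'a) \<Rightarrow> bool" where
  "dual_basis s M G e c \<longleftrightarrow> finite G \<and> (\<forall>g\<in>G. e g \<in> M) \<and>
     (\<forall>g\<in>G. linear_on s (*) M (\<lambda>x. c x g)) \<and> (\<forall>x\<in>M. (\<Sum>g\<in>G. s (c x g) (e g)) = x)"

definition has_dual_basis :: "('a::comm_ring_1 \<Rightarrow> 'm::ab_group_add \<Rightarrow> 'm) \<Rightarrow> 'm set \<Rightarrow> nat \<Rightarrow> bool" where
  "has_dual_basis s M k \<longleftrightarrow> module.subspace s M \<and> (\<exists>(G::'m set) e c. card G = k \<and> dual_basis s M G e c)"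

context module
begin

lemma functional_zero: "subspace M \<Longrightarrow> linear_on scale (*) M \<phi> \<Longrightarrow> \<phi> 0 = 0"
  by (rule linear_on_zero[OF module_axioms module_times])

lemma functional_diff:
  "subspace M \<Longrightarrow> linear_on scale (*) M \<phi> \<Longrightarrow> x \<in> M \<Longrightarrow> y \<in> M \<Longrightarrow> \<phi> (x - y) = \<phi> x - \<phi> y"
  by (rule linear_on_diff[OF module_axioms module_times])

lemma subspace_kernel_on:
  assumes "subspace M" "linear_on scale (*) M \<phi>"
  shows "subspace {x \<in> M. \<phi> x = 0}"
  using assms functional_zero[OF assms] unfolding subspace_def linear_on_def by simp

lemma has_dual_basisE:
  assumes "has_dual_basis scale M k"
  obtains G :: "'b set" and e c where "subspace M" "card G = k" "dual_basis scale M G e c"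
  using assms unfolding has_dual_basis_def by blast

lemma functional_expand:
  assumes "dual_basis scale M G e c" "subspace M" "linear_on scale (*) M \<phi>" "y \<in> M"
  shows "\<phi> y = (\<Sum>g\<in>G. c y g * \<phi> (e g))"
proof -
  have "\<phi> y = \<phi> (\<Sum>g\<in>G. c y g *s e g)"
    using assms(1,4) unfolding dual_basis_def by simp
  also have "\<dots> = (\<Sum>g\<in>G. \<phi> (c y g *s e g))"
    using assms(1-3) unfolding dual_basis_def
    by (intro linear_on_sum[OF module_axioms module_times]) (auto intro: subspace_scale)
  also have "\<dots> = (\<Sum>g\<in>G. c y g * \<phi> (e g))"
    using assms(1,3) unfolding dual_basis_def by (simp add: linear_on_scale)
  finally show ?thesis .
qed

lemma linear_functional_support_sum:
  assumes sub: "subspace M" and lin: "linear_on scale (\<lambda>c f m. c * f m) M sec"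
    and fin: "\<forall>x\<in>M. finite {m. sec x m \<noteq> 0}"
  shows "linear_on scale (*) M (\<lambda>x. \<Sum>m\<in>{m. sec x m \<noteq> 0}. sec x m * w m)"
proof -
  have support_sum: "(\<Sum>m\<in>{m. sec x m \<noteq> 0}. sec x m * w m) = (\<Sum>m\<in>T. sec x m * w m)"
    if "finite T" "{m. sec x m \<noteq> 0} \<subseteq> T" for x T
    using that by (intro sum.mono_neutral_left) auto
  show ?thesis
    unfolding linear_on_def
  proof (intro conjI ballI allI)
    fix x y assume xy: "x \<in> M" "y \<in> M"
    define T where "T = {m. sec x m \<noteq> 0} \<union> {m. sec y m \<noteq> 0} \<union> {m. sec (x + y) m \<noteq> 0}"
    have "finite T"
      unfolding T_def using fin xy subspace_add[OF sub xy] by auto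
    moreover have "sec (x + y) m = sec x m + sec y m" for m
      using lin xy unfolding linear_on_def by (simp add: plus_fun_def)
    ultimately show "(\<Sum>m\<in>{m. sec (x + y) m \<noteq> 0}. sec (x + y) m * w m) =
        (\<Sum>m\<in>{m. sec x m \<noteq> 0}. sec x m * w m) + (\<Sum>m\<in>{m. sec y m \<noteq> 0}. sec y m * w m)"
      by (subst (1 2 3) support_sum[where T = T]) (auto simp: T_def distrib_right sum.distrib)
  next
    fix a x assume x: "x \<in> M"
    define T where "T = {m. sec x m \<noteq> 0} \<union> {m. sec (a *s x) m \<noteq> 0}"
    have "finite T"
      unfolding T_def using fin x subspace_scale[OF sub x] by auto
    moreover have "sec (a *s x) m = a * sec x m" for m
      using lin x unfolding linear_on_def by metis
    ultimately show "(\<Sum>m\<in>{m. sec (a *s x) m \<noteq> 0}. sec (a *s x) m * w m) =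
        a * (\<Sum>m\<in>{m. sec x m \<noteq> 0}. sec x m * w m)"
      by (subst (1 2) support_sum[where T = T]) (auto simp: T_def sum_distrib_left mult.assoc)
  qed
qed

text \<open>The coefficient of a generator \<open>g\<close> is obtained by lifting to the free module with the
  section and expanding every basis vector \<open>m\<close> in the generators as \<open>m = \<Sum>g. \<kappa> m g *s g\<close>.\<close>
lemma has_dual_basis_if_projective:
  assumes "projective_mod scale M" "fin_gen scale M"
  obtains k where "has_dual_basis scale M k"
proof -
  obtain G where G: "finite G" "G \<subseteq> M" "span G = M"
    using assms(2) unfolding fin_gen_def by blast
  have sub: "subspace M"
    using assms(1) unfolding projective_mod_def by simp
  obtain sec :: "'b \<Rightarrow> 'b \<Rightarrow> 'a" where lin: "linear_on scale (\<lambda>c f m. c * f m) M sec"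
    and sec: "\<forall>x\<in>M. finite {m. sec x m \<noteq> 0} \<and> {m. sec x m \<noteq> 0} \<subseteq> M \<and>
                 (\<Sum>m\<in>{m. sec x m \<noteq> 0}. sec x m *s m) = x"
    using assms(1) unfolding projective_mod_def by blast
  have "\<forall>m\<in>M. \<exists>u. m = (\<Sum>g\<in>G. u g *s g)"
    using G span_finite[OF G(1)] by auto
  then obtain \<kappa> where \<kappa>: "\<forall>m\<in>M. m = (\<Sum>g\<in>G. \<kappa> m g *s g)"
    by metis
  define c where "c x g = (\<Sum>m\<in>{m. sec x m \<noteq> 0}. sec x m * \<kappa> m g)" for x g
  have "(\<Sum>g\<in>G. c x g *s g) = x" if x: "x \<in> M" for x
  proof -
    have "(\<Sum>g\<in>G. c x g *s g) = (\<Sum>m\<in>{m. sec x m \<noteq> 0}. sec x m *s (\<Sum>g\<in>G. \<kappa> m g *s g))"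
      unfolding c_def by (simp add: scale_sum_left scale_sum_right sum.swap[of _ G])
    also have "\<dots> = (\<Sum>m\<in>{m. sec x m \<noteq> 0}. sec x m *s m)"
    proof (rule sum.cong[OF refl])
      fix m assume "m \<in> {m. sec x m \<noteq> 0}"
      then have "m \<in> M" using sec x by blast
      then show "sec x m *s (\<Sum>g\<in>G. \<kappa> m g *s g) = sec x m *s m" using \<kappa> by metis
    qed
    also have "\<dots> = x"
      using sec x by blast
    finally show ?thesis .
  qed
  then have "dual_basis scale M G id c"
    unfolding dual_basis_def c_def using G(1,2) linear_functional_support_sum[OF sub lin] sec
    by auto
  then show ?thesis
    using sub that unfolding has_dual_basis_def by blast
qed

lemma dual_basis_remove:
  assumes db: "dual_basis scale M G e c" and g0: "g0 \<in> G"
    and rel: "e g0 = (\<Sum>g\<in>G - {g0}. a g *s e g)"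
  shows "dual_basis scale M (G - {g0}) e (\<lambda>x g. c x g + c x g0 * a g)"
proof -
  have fin: "finite G" and lin: "\<forall>g\<in>G. linear_on scale (*) M (\<lambda>x. c x g)"
    using db unfolding dual_basis_def by auto
  have "(\<Sum>g\<in>G - {g0}. (c x g + c x g0 * a g) *s e g) = x" if "x \<in> M" for x
  proof -
    have "(\<Sum>g\<in>G - {g0}. (c x g + c x g0 * a g) *s e g) =
        (\<Sum>g\<in>G - {g0}. c x g *s e g) + c x g0 *s e g0"
      unfolding rel by (simp add: scale_left_distrib sum.distrib scale_sum_right)
    also have "\<dots> = (\<Sum>g\<in>G. c x g *s e g)"
      using fin g0 by (simp add: sum.remove add.commute)
    finally show ?thesis
      using db that unfolding dual_basis_def by simp
  qed
  moreover have "linear_on scale (*) M (\<lambda>x. c x g + c x g0 * a g)" if "g \<in> G" for g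
    using lin that g0 unfolding linear_on_def by (simp add: algebra_simps)
  ultimately show ?thesis
    using db unfolding dual_basis_def by auto
qed

lemma dual_basis_kernel_sum:
  assumes db: "dual_basis scale M G e c" and sub: "subspace M" and \<phi>: "linear_on scale (*) M \<phi>"
    and y: "y \<in> M"
  shows "(\<Sum>g\<in>G. c y g *s (e g - \<phi> (e g) *s v)) = y - \<phi> y *s v"
proof -
  have "(\<Sum>g\<in>G. c y g *s (e g - \<phi> (e g) *s v)) =
      (\<Sum>g\<in>G. c y g *s e g) - (\<Sum>g\<in>G. c y g * \<phi> (e g)) *s v"
    by (simp add: scale_right_diff_distrib sum_subtractf scale_sum_left)
  then show ?thesis
    using db y functional_expand[OF db sub \<phi> y] unfolding dual_basis_def by simp
qed

lemma dual_basis_kernel: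
  assumes db: "dual_basis scale M G e c" and sub: "subspace M" and \<phi>: "linear_on scale (*) M \<phi>"
    and v: "v \<in> M" "\<phi> v = 1"
  shows "dual_basis scale {x \<in> M. \<phi> x = 0} G (\<lambda>g. e g - \<phi> (e g) *s v) c"
proof -
  have eM: "\<forall>g\<in>G. e g \<in> M"
    using db unfolding dual_basis_def by blast
  have "\<phi> (e g - \<phi> (e g) *s v) = 0" if "g \<in> G" for g
    using that eM v functional_diff[OF sub \<phi>] subspace_scale[OF sub] by (simp add: linear_on_scale[OF \<phi>])
  then show ?thesis
    using db eM sub v dual_basis_kernel_sum[OF db sub \<phi>] unfolding dual_basis_def
    by (auto intro: linear_on_subset subspace_diff subspace_scale)
qed

end

locale sq_zero_module = sq_zero_principal_maximal mm r + module s
  for mm :: "'a::comm_ring_1 set" and r :: 'a and s :: "'a \<Rightarrow> 'm::ab_group_add \<Rightarrow> 'm"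
begin

lemma exists_not_r_multiple:
  assumes "subspace M" "M \<noteq> {0}"
  obtains x where "x \<in> M" "\<forall>z\<in>M. x \<noteq> s r z"
proof -
  obtain x where x: "x \<in> M" "x \<noteq> 0"
    using assms subspace_0 by blast
  show ?thesis
  proof (cases "\<forall>z\<in>M. x \<noteq> s r z")
    case False
    then obtain z where z: "z \<in> M" "x = s r z" by auto
    have "z \<noteq> s r w" for w
      using z x r_mult_mm[OF r_mem_mm] by (auto simp: mult.assoc[symmetric])
    then show ?thesis using that z(1) by blast
  qed (use x that in blast)
qed

lemma functional_one_if_not_r_multiple:
  assumes "has_dual_basis s M k" "x \<in> M" "\<forall>z\<in>M. x \<noteq> s r z"
  obtains \<phi> where "linear_on s (*) M \<phi>" "\<phi> x = 1"
proof -
  obtain G :: "'m set" and e c where sub: "subspace M" and db: "dual_basis s M G e c"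
    using assms(1) by (rule has_dual_basisE)
  have "\<exists>g\<in>G. c x g \<notin> mm"
  proof (rule ccontr)
    assume "\<not> ?thesis"
    then obtain b where b: "\<forall>g\<in>G. c x g = r * b g"
      unfolding mem_mm_iff by metis
    have "x = (\<Sum>g\<in>G. s (c x g) (e g))"
      using db assms(2) unfolding dual_basis_def by simp
    also have "\<dots> = (\<Sum>g\<in>G. s (r * b g) (e g))"
      using b by simp
    also have "\<dots> = s r (\<Sum>g\<in>G. s (b g) (e g))"
      by (simp add: scale_sum_right)
    finally have "x = s r (\<Sum>g\<in>G. s (b g) (e g))" .
    moreover have "(\<Sum>g\<in>G. s (b g) (e g)) \<in> M"
      using db sub unfolding dual_basis_def by (auto intro: subspace_sum subspace_scale)
    ultimately show False
      using assms(3) by blast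
  qed
  then obtain g where g: "g \<in> G" "c x g \<notin> mm" by blast
  obtain u where u: "c x g * u = 1"
    using unit_if_notin_mm[OF g(2)] by blast
  have "linear_on s (*) M (\<lambda>y. u * c y g)"
    using db g(1) unfolding dual_basis_def by (auto intro: linear_on_mult_left)
  then show ?thesis
    using u that by (simp add: mult.commute)
qed

lemma functional_divide_by_r:
  assumes "has_dual_basis s M k" "linear_on s (*) M \<psi>" "\<forall>x\<in>M. \<psi> x \<in> mm"
  obtains \<phi> where "linear_on s (*) M \<phi>" "\<forall>x\<in>M. \<psi> x = r * \<phi> x"
proof -
  obtain G :: "'m set" and e c where sub: "subspace M" and db: "dual_basis s M G e c"
    using assms(1) by (rule has_dual_basisE)
  have "\<forall>g\<in>G. \<exists>a. \<psi> (e g) = r * a"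
    using assms(3) db unfolding dual_basis_def mem_mm_iff by blast
  then obtain \<kappa> where \<kappa>: "\<forall>g\<in>G. \<psi> (e g) = r * \<kappa> g" by metis
  define \<phi> where "\<phi> y = (\<Sum>g\<in>G. c y g * \<kappa> g)" for y
  have "linear_on s (*) M \<phi>"
    using db unfolding \<phi>_def dual_basis_def linear_on_def
    by (simp add: distrib_right sum.distrib sum_distrib_left mult.assoc)
  moreover have "\<psi> x = r * \<phi> x" if "x \<in> M" for x
    using functional_expand[OF db sub assms(2) that] \<kappa>
    by (simp add: \<phi>_def sum_distrib_left algebra_simps)
  ultimately show ?thesis using that by blast
qed

text \<open>Some coefficient of \<open>v\<close> is a unit, so the corresponding basis vector of the kernel is a
  combination of the others and can be dropped.\<close>
lemma has_dual_basis_kernel: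
  assumes "has_dual_basis s M k" and \<phi>: "linear_on s (*) M \<phi>" and v: "v \<in> M" "\<phi> v = 1"
  shows "1 \<le> k \<and> has_dual_basis s {x \<in> M. \<phi> x = 0} (k - 1)"
proof -
  obtain G :: "'m set" and e c where sub: "subspace M" and k: "card G = k"
    and db: "dual_basis s M G e c"
    using assms(1) by (rule has_dual_basisE)
  define e' where "e' g = e g - s (\<phi> (e g)) v" for g
  have db': "dual_basis s {x \<in> M. \<phi> x = 0} G e' c"
    unfolding e'_def using dual_basis_kernel[OF db sub \<phi> v] .
  have "\<exists>g\<in>G. c v g \<notin> mm"
  proof (rule ccontr)
    assume "\<not> ?thesis"
    then have "(\<Sum>g\<in>G. c v g * \<phi> (e g)) \<in> mm"
      by (intro sum_mem_mm) (metis mult.commute mult_mem_mm)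
    then show False
      using functional_expand[OF db sub \<phi> v(1)] v(2) one_notin_mm by simp
  qed
  then obtain g0 where g0: "g0 \<in> G" "c v g0 \<notin> mm" by blast
  obtain u where u: "u * c v g0 = 1"
    using unit_if_notin_mm[OF g0(2)] by (metis mult.commute)
  have fin: "finite G"
    using db unfolding dual_basis_def by blast
  have "(\<Sum>g\<in>G. s (c v g) (e' g)) = 0"
    unfolding e'_def using dual_basis_kernel_sum[OF db sub \<phi> v(1)] v(2) by simp
  then have "s (c v g0) (e' g0) + (\<Sum>g\<in>G - {g0}. s (c v g) (e' g)) = 0"
    using fin g0(1) by (simp add: sum.remove)
  then have "s (c v g0) (e' g0) = - (\<Sum>g\<in>G - {g0}. s (c v g) (e' g))"
    by (simp add: eq_neg_iff_add_eq_0)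
  then have "e' g0 = s u (- (\<Sum>g\<in>G - {g0}. s (c v g) (e' g)))"
    using u by (metis scale_one scale_scale)
  also have "\<dots> = (\<Sum>g\<in>G - {g0}. s (- u * c v g) (e' g))"
    by (simp add: scale_sum_right sum_negf)
  finally have "e' g0 = (\<Sum>g\<in>G - {g0}. s (- u * c v g) (e' g))" .
  from dual_basis_remove[OF db' g0(1) this] have "has_dual_basis s {x \<in> M. \<phi> x = 0} (k - 1)"
    using subspace_kernel_on[OF sub \<phi>] card_Diff_singleton[OF g0(1)] k
    unfolding has_dual_basis_def by blast
  moreover have "1 \<le> k"
    using fin k g0(1) by (metis One_nat_def Suc_leI card_gt_0_iff empty_iff)
  ultimately show ?thesis by blast
qed

end

section \<open>Chain complexes and their direct sums\<close>

definition subcomplex_sum :: "(nat \<Rightarrow> 'm::plus set) \<Rightarrow> (nat \<Rightarrow> 'm set) \<Rightarrow> nat \<Rightarrow> 'm set" where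
  "subcomplex_sum A B n = {a + b | a b. a \<in> A n \<and> b \<in> B n}"

context module
begin

lemma chain_complex_subspace: "chain_complex scale X d \<Longrightarrow> subspace (X n)"
  unfolding chain_complex_def by blast

lemma chain_complex_d_mem: "chain_complex scale X d \<Longrightarrow> x \<in> X (Suc n) \<Longrightarrow> d n x \<in> X n"
  unfolding chain_complex_def by blast

lemma chain_complex_add:
  "chain_complex scale X d \<Longrightarrow> x \<in> X (Suc n) \<Longrightarrow> y \<in> X (Suc n) \<Longrightarrow> d n (x + y) = d n x + d n y"
  unfolding chain_complex_def linear_on_def by blast

lemma chain_complex_scale: "chain_complex scale X d \<Longrightarrow> x \<in> X (Suc n) \<Longrightarrow> d n (c *s x) = c *s d n x"
  unfolding chain_complex_def linear_on_def by blast

lemma chain_complex_dd: "chain_complex scale X d \<Longrightarrow> x \<in> X (Suc (Suc n)) \<Longrightarrow> d n (d (Suc n) x) = 0"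
  unfolding chain_complex_def by blast

lemma functional_comp_differential:
  assumes "chain_complex scale X d" "linear_on scale (*) (X n) f"
  shows "linear_on scale (*) (X (Suc n)) (\<lambda>z. f (d n z))"
  using assms(2) chain_complex_d_mem[OF assms(1)] chain_complex_add[OF assms(1)] chain_complex_scale[OF assms(1)]
  unfolding linear_on_def by simp

lemma chain_complex_zero: "chain_complex scale X d \<Longrightarrow> d n 0 = 0"
  using chain_complex_scale[of X d 0 n 0] chain_complex_subspace[of X d "Suc n"] subspace_0 by simp

lemma subcomplexD:
  assumes "subcomplex scale A X d"
  shows "subspace (A n)" "A n \<subseteq> X n" "a \<in> A (Suc n) \<Longrightarrow> d n a \<in> A n"
  using assms unfolding subcomplex_def by (auto simp: image_subset_iff)

lemma subcomplex_trans: "subcomplex scale B Y d \<Longrightarrow> subcomplex scale Y X d \<Longrightarrow> subcomplex scale B X d"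
  unfolding subcomplex_def by blast

lemma chain_complex_subcomplex:
  assumes "chain_complex scale X d" "subcomplex scale Y X d"
  shows "chain_complex scale Y d"
proof -
  have "Y n \<subseteq> X n" for n
    using assms(2) unfolding subcomplex_def by blast
  then show ?thesis
    using assms unfolding chain_complex_def subcomplex_def linear_on_def by (metis image_subset_iff subsetD)
qed

lemma chain_acyclic_zero:
  assumes "chain_complex scale X d" "\<forall>n. X n = {0}"
  shows "chain_acyclic X d"
  using assms chain_complex_zero unfolding chain_acyclic_def cycles_def by auto

lemma complex_direct_sum_zero:
  assumes "chain_complex scale X d"
  shows "complex_direct_sum scale X d X (\<lambda>_. {0})"
  using assms chain_complex_subspace[OF assms] subspace_0[OF chain_complex_subspace[OF assms]]
  unfolding complex_direct_sum_def subcomplex_def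
  by (auto simp: chain_complex_zero image_subset_iff chain_complex_d_mem subspace_def)

lemma complex_direct_sum_commute:
  assumes "complex_direct_sum scale X d A B"
  shows "complex_direct_sum scale X d B A"
proof -
  have "{p + q |p q. p \<in> B n \<and> q \<in> A n} = {p + q |p q. p \<in> A n \<and> q \<in> B n}" for n
    by (auto simp: add.commute) (metis add.commute)+
  then show ?thesis
    using assms unfolding complex_direct_sum_def by auto
qed

lemma subcomplex_subcomplex_sum:
  assumes cc: "chain_complex scale X d" and A: "subcomplex scale A X d" and B: "subcomplex scale B X d"
  shows "subcomplex scale (subcomplex_sum A B) X d"
  unfolding subcomplex_def
proof (intro allI conjI)
  fix n
  note A = subcomplexD[OF A] and B = subcomplexD[OF B]
  show "subspace (subcomplex_sum A B n)"
    unfolding subspace_def subcomplex_sum_def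
  proof (intro conjI ballI allI)
    show "0 \<in> {a + b |a b. a \<in> A n \<and> b \<in> B n}"
      using subspace_0[OF A(1)] subspace_0[OF B(1)] by force
  next
    fix u v assume "u \<in> {a + b |a b. a \<in> A n \<and> b \<in> B n}" "v \<in> {a + b |a b. a \<in> A n \<and> b \<in> B n}"
    then obtain a b a' b' where "u = a + b" "v = a' + b'" "a \<in> A n" "b \<in> B n" "a' \<in> A n" "b' \<in> B n"
      by auto
    then show "u + v \<in> {a + b |a b. a \<in> A n \<and> b \<in> B n}"
      using subspace_add[OF A(1)] subspace_add[OF B(1)]
      by (intro CollectI exI[of _ "a + a'"] exI[of _ "b + b'"]) (auto simp: algebra_simps)
  next
    fix c u assume "u \<in> {a + b |a b. a \<in> A n \<and> b \<in> B n}"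
    then obtain a b where "u = a + b" "a \<in> A n" "b \<in> B n" by auto
    then show "c *s u \<in> {a + b |a b. a \<in> A n \<and> b \<in> B n}"
      using subspace_scale[OF A(1)] subspace_scale[OF B(1)]
      by (intro CollectI exI[of _ "c *s a"] exI[of _ "c *s b"]) (auto simp: algebra_simps)
  qed
  show "subcomplex_sum A B n \<subseteq> X n"
    unfolding subcomplex_sum_def using A(2) B(2) subspace_add[OF chain_complex_subspace[OF cc]] by blast
  show "d n ` subcomplex_sum A B (Suc n) \<subseteq> subcomplex_sum A B n"
  proof
    fix w assume "w \<in> d n ` subcomplex_sum A B (Suc n)"
    then obtain a b where "w = d n (a + b)" "a \<in> A (Suc n)" "b \<in> B (Suc n)"
      unfolding subcomplex_sum_def by auto
    moreover have "a \<in> X (Suc n)" "b \<in> X (Suc n)"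
      using calculation A(2) B(2) by auto
    ultimately show "w \<in> subcomplex_sum A B n"
      unfolding subcomplex_sum_def using chain_complex_add[OF cc] A(3) B(3) by blast
  qed
qed

lemma direct_sum_assoc:
  assumes Y: "subspace Y" and AY: "A \<inter> Y = {0}" "{a + y |a y. a \<in> A \<and> y \<in> Y} = X"
    and BC: "B \<inter> C = {0}" "{b + c |b c. b \<in> B \<and> c \<in> C} = Y"
  shows "{a + b |a b. a \<in> A \<and> b \<in> B} \<inter> C = {0}"
    and "{p + c |p c. p \<in> {a + b |a b. a \<in> A \<and> b \<in> B} \<and> c \<in> C} = X"
proof -
  have zero: "0 \<in> A" "0 \<in> B" "0 \<in> C"
    using AY(1) BC(1) by auto
  have "b + 0 \<in> Y" "0 + c \<in> Y" if "b \<in> B" "c \<in> C" for b c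
    unfolding BC(2)[symmetric] using that zero by blast+
  then have B: "B \<subseteq> Y" and C: "C \<subseteq> Y"
    using zero by auto
  have "u = 0" if "a \<in> A" "b \<in> B" "u = a + b" "u \<in> C" for a b u
  proof -
    have "a = u - b"
      using that(3) by simp
    moreover have "u - b \<in> Y"
      using that(2,4) B C subspace_diff[OF Y] by blast
    ultimately have "a \<in> Y"
      by simp
    then have "a = 0"
      using AY(1) that(1) by blast
    then show "u = 0"
      using BC(1) that by auto
  qed
  moreover have "0 \<in> {a + b |a b. a \<in> A \<and> b \<in> B}"
    using zero by (intro CollectI exI[of _ 0]) simp
  ultimately show "{a + b |a b. a \<in> A \<and> b \<in> B} \<inter> C = {0}"
    using zero by blast
  show "{p + c |p c. p \<in> {a + b |a b. a \<in> A \<and> b \<in> B} \<and> c \<in> C} = X"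
  proof
    show "{p + c |p c. p \<in> {a + b |a b. a \<in> A \<and> b \<in> B} \<and> c \<in> C} \<subseteq> X"
    proof
      fix z assume "z \<in> {p + c |p c. p \<in> {a + b |a b. a \<in> A \<and> b \<in> B} \<and> c \<in> C}"
      then obtain a b c where "z = a + (b + c)" "a \<in> A" "b \<in> B" "c \<in> C"
        by (auto simp: add.assoc)
      moreover have "b + c \<in> Y"
        unfolding BC(2)[symmetric] using calculation by blast
      ultimately show "z \<in> X"
        unfolding AY(2)[symmetric] by blast
    qed
    show "X \<subseteq> {p + c |p c. p \<in> {a + b |a b. a \<in> A \<and> b \<in> B} \<and> c \<in> C}"
    proof
      fix z assume "z \<in> X"
      then obtain a b c where "z = (a + b) + c" "a \<in> A" "b \<in> B" "c \<in> C"
        unfolding AY(2)[symmetric] BC(2)[symmetric] by (auto simp: add.assoc)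
      then show "z \<in> {p + c |p c. p \<in> {a + b |a b. a \<in> A \<and> b \<in> B} \<and> c \<in> C}"
        by blast
    qed
  qed
qed

lemma complex_direct_sum_assoc:
  assumes cc: "chain_complex scale X d" and XA: "complex_direct_sum scale X d A Y"
    and YB: "complex_direct_sum scale Y d B C"
  shows "complex_direct_sum scale X d (subcomplex_sum A B) C"
proof -
  have sA: "subcomplex scale A X d" and sY: "subcomplex scale Y X d" and sB: "subcomplex scale B Y d"
    and sC: "subcomplex scale C Y d"
    using XA YB unfolding complex_direct_sum_def by auto
  have "subcomplex_sum A B n \<inter> C n = {0} \<and>
      {p + q |p q. p \<in> subcomplex_sum A B n \<and> q \<in> C n} = X n" for n
  proof -
    have "A n \<inter> Y n = {0}" "{a + y |a y. a \<in> A n \<and> y \<in> Y n} = X n"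
      "B n \<inter> C n = {0}" "{b + c |b c. b \<in> B n \<and> c \<in> C n} = Y n"
      using XA YB unfolding complex_direct_sum_def by auto
    from direct_sum_assoc[OF subcomplexD(1)[OF sY] this] show ?thesis
      unfolding subcomplex_sum_def by blast
  qed
  then show ?thesis
    unfolding complex_direct_sum_def
    using subcomplex_subcomplex_sum[OF cc sA subcomplex_trans[OF sB sY]] subcomplex_trans[OF sC sY] by blast
qed

text \<open>A cycle of \<open>A + B\<close> splits into cycles of \<open>A\<close> and \<open>B\<close> because \<open>A\<close> and \<open>Y \<supseteq> B\<close>
  meet trivially.\<close>
lemma chain_acyclic_subcomplex_sum:
  assumes cc: "chain_complex scale X d" and XA: "complex_direct_sum scale X d A Y"
    and sB: "subcomplex scale B Y d" and aA: "chain_acyclic A d" and aB: "chain_acyclic B d"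
  shows "chain_acyclic (subcomplex_sum A B) d"
  unfolding chain_acyclic_def
proof (intro allI subsetI)
  fix n z assume z: "z \<in> cycles (subcomplex_sum A B) d n"
  have sA: "subcomplex scale A X d" and sY: "subcomplex scale Y X d" and AY0: "\<And>k. A k \<inter> Y k = {0}"
    using XA unfolding complex_direct_sum_def by auto
  have AX: "A k \<subseteq> X k" and BY: "B k \<subseteq> Y k" and YX: "Y k \<subseteq> X k" for k
    using subcomplexD(2)[OF sA] subcomplexD(2)[OF sB] subcomplexD(2)[OF sY] by auto
  obtain a b where ab: "z = a + b" "a \<in> A n" "b \<in> B n"
    using z unfolding cycles_def subcomplex_sum_def by (auto split: if_splits)
  have "a \<in> cycles A d n \<and> b \<in> cycles B d n"
  proof (cases n)
    case (Suc k)
    have "d k (a + b) = 0"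
      using z ab Suc unfolding cycles_def by simp
    moreover have "a \<in> X (Suc k)" "b \<in> X (Suc k)"
      using ab Suc AX BY YX by blast+
    ultimately have "d k a + d k b = 0"
      using chain_complex_add[OF cc] by simp
    then have "d k a = - d k b"
      by (simp add: eq_neg_iff_add_eq_0)
    moreover have "d k b \<in> Y k"
      using subcomplexD(3)[OF sB] ab Suc BY by blast
    ultimately have "d k a \<in> A k \<inter> Y k"
      using subcomplexD(3)[OF sA, of a k] ab Suc subspace_neg[OF subcomplexD(1)[OF sY]] by auto
    then have "d k a = 0" "d k b = 0"
      using AY0 \<open>d k a = - d k b\<close> by auto
    then show ?thesis
      using ab Suc unfolding cycles_def by simp
  qed (use ab in \<open>simp add: cycles_def\<close>)
  then obtain a' b' where "a' \<in> A (Suc n)" "a = d n a'" "b' \<in> B (Suc n)" "b = d n b'"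
    using aA aB unfolding chain_acyclic_def by blast
  moreover then have "d n (a' + b') = z"
    using ab chain_complex_add[OF cc] AX BY YX by blast
  ultimately show "z \<in> d n ` subcomplex_sum A B (Suc n)"
    unfolding subcomplex_sum_def by blast
qed

end

section \<open>Isomorphisms onto sums of the complexes \<open>\<Sigma>\<^sup>i E\<^sub>j\<close>\<close>

lemma sumE_mod_last: "f \<in> sumE_mod N ii jj n \<Longrightarrow> f N = 0"
  unfolding sumE_mod_def by blast

lemma sumE_mod_one_eq: "f \<in> sumE_mod 1 ii jj n \<Longrightarrow> f = (\<lambda>k. if k = 0 then f 0 else 0)"
  unfolding sumE_mod_def fun_eq_iff by auto

lemma sumE_mod_one_in_range:
  assumes "i \<le> n" "n \<le> i + j"
  shows "sumE_mod 1 (\<lambda>_. i) (\<lambda>_. j) n = range (\<lambda>c k. if k = 0 then c else 0)"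
proof
  show "sumE_mod 1 (\<lambda>_. i) (\<lambda>_. j) n \<subseteq> range (\<lambda>c k. if k = 0 then c else 0)"
    using sumE_mod_one_eq by (blast intro: range_eqI)
  show "range (\<lambda>c k. if k = 0 then c else 0) \<subseteq> sumE_mod 1 (\<lambda>_. i) (\<lambda>_. j) n"
    using assms unfolding sumE_mod_def by (auto split: if_splits)
qed

lemma sumE_mod_one_out: "\<not> (i \<le> n \<and> n \<le> i + j) \<Longrightarrow> sumE_mod 1 (\<lambda>_. i) (\<lambda>_. j) n = {0}"
  unfolding sumE_mod_def by (auto simp: fun_eq_iff)

lemma sumE_mod_Suc_upd:
  "g \<in> sumE_mod N ii jj n \<Longrightarrow> h \<in> sumE_mod 1 (\<lambda>_. i) (\<lambda>_. j) n \<Longrightarrow>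
    g(N := h 0) \<in> sumE_mod (Suc N) (ii(N := i)) (jj(N := j)) n"
  unfolding sumE_mod_def by (auto simp: less_Suc_eq)

lemma sumE_mod_SucD:
  assumes "f \<in> sumE_mod (Suc N) (ii(N := i)) (jj(N := j)) n"
  shows "f(N := 0) \<in> sumE_mod N ii jj n" "(\<lambda>k. if k = 0 then f N else 0) \<in> sumE_mod 1 (\<lambda>_. i) (\<lambda>_. j) n"
  using assms unfolding sumE_mod_def by (auto simp: less_Suc_eq)

lemma sumE_mod_upd_inj:
  assumes g: "g \<in> sumE_mod N ii jj n" "g' \<in> sumE_mod N ii jj n"
    and h: "h \<in> sumE_mod 1 ii' jj' n" "h' \<in> sumE_mod 1 ii' jj' n"
    and eq: "g(N := h 0) = g'(N := h' 0)"
  shows "g = g' \<and> h = h'"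
proof
  show "g = g'"
  proof
    fix k
    show "g k = g' k"
      using fun_cong[OF eq, of k] sumE_mod_last[OF g(1)] sumE_mod_last[OF g(2)] by (cases "k = N") auto
  qed
  have "h 0 = h' 0"
    using fun_cong[OF eq, of N] by simp
  then show "h = h'"
    using sumE_mod_one_eq[OF h(1)] sumE_mod_one_eq[OF h(2)] by metis
qed

lemma sumE_diff_upd:
  "sumE_diff r (ii(N := i)) n (g(N := h 0)) = (sumE_diff r ii n g)(N := sumE_diff r (\<lambda>_. i) n h 0)"
  unfolding sumE_diff_def by auto

lemma chain_iso_zero:
  "chain_iso s (\<lambda>_. {0}) d fscale (sumE_mod 0 ii jj) (sumE_diff (r :: 'a::comm_ring_1) ii)"
proof -
  have "sumE_mod 0 ii jj n = {0 :: nat \<Rightarrow> 'a}" for n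
    unfolding sumE_mod_def by (auto simp: fun_eq_iff)
  moreover have "sumE_diff r ii n 0 = 0" for n
    by (simp add: sumE_diff_def fun_eq_iff)
  ultimately show ?thesis
    unfolding chain_iso_def
    by (intro exI[of _ "\<lambda>n z. 0"]) (simp add: bij_betw_def linear_on_def fscale_def zero_fun_def)
qed

definition component :: "'m::ab_group_add set \<Rightarrow> 'm set \<Rightarrow> 'm \<Rightarrow> 'm" where
  "component A Q z = (THE a. a \<in> A \<and> z - a \<in> Q)"

context module
begin

lemma component_eq:
  assumes "subspace A" "subspace Q" "A \<inter> Q = {0}" "a \<in> A" "q \<in> Q"
  shows "component A Q (a + q) = a"
  unfolding component_def
proof (rule the_equality)
  fix a' assume a': "a' \<in> A \<and> a + q - a' \<in> Q"
  have "(a + q - a') - q \<in> Q"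
    using subspace_diff[OF assms(2)] a' assms(5) by blast
  then have "a - a' \<in> Q"
    by (simp add: algebra_simps)
  moreover have "a - a' \<in> A"
    using subspace_diff[OF assms(1) assms(4)] a' by blast
  ultimately have "a - a' = 0"
    using assms(3) by blast
  then show "a' = a"
    by simp
qed (use assms in simp)

lemma bij_betw_direct_sum_upd:
  assumes sub: "subspace A" "subspace Q" "A \<inter> Q = {0}"
    and \<alpha>: "bij_betw \<alpha> A (sumE_mod 1 (\<lambda>_. i) (\<lambda>_. j) n)" and \<beta>: "bij_betw \<beta> Q (sumE_mod N ii jj n)"
  shows "bij_betw (\<lambda>z. (\<beta> (z - component A Q z))(N := \<alpha> (component A Q z) 0))
           {a + q |a q. a \<in> A \<and> q \<in> Q} (sumE_mod (Suc N) (ii(N := i)) (jj(N := j)) n)"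
    (is "bij_betw ?\<Psi> _ _")
proof -
  have \<Psi>: "?\<Psi> (a + q) = (\<beta> q)(N := \<alpha> a 0)" if "a \<in> A" "q \<in> Q" for a q
    using component_eq[OF sub that] by simp
  have unique: "a = a' \<and> q = q'" if "a \<in> A" "q \<in> Q" "a' \<in> A" "q' \<in> Q"
    and eq: "(\<beta> q)(N := \<alpha> a 0) = (\<beta> q')(N := \<alpha> a' 0)" for a q a' q'
    using sumE_mod_upd_inj[OF bij_betw_apply[OF \<beta>] bij_betw_apply[OF \<beta>] bij_betw_apply[OF \<alpha>]
        bij_betw_apply[OF \<alpha>] eq] that bij_betw_imp_inj_on[OF \<alpha>] bij_betw_imp_inj_on[OF \<beta>]
    by (auto dest: inj_onD)
  have "inj_on ?\<Psi> {a + q |a q. a \<in> A \<and> q \<in> Q}"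
  proof (rule inj_onI)
    fix z z' assume "z \<in> {a + q |a q. a \<in> A \<and> q \<in> Q}" "z' \<in> {a + q |a q. a \<in> A \<and> q \<in> Q}"
      and eq: "?\<Psi> z = ?\<Psi> z'"
    then obtain a q a' q' where "z = a + q" "z' = a' + q'" "a \<in> A" "q \<in> Q" "a' \<in> A" "q' \<in> Q"
      by blast
    then show "z = z'"
      using eq unique[of a q a' q'] by (simp add: \<Psi>)
  qed
  moreover have "?\<Psi> ` {a + q |a q. a \<in> A \<and> q \<in> Q} \<subseteq> sumE_mod (Suc N) (ii(N := i)) (jj(N := j)) n"
    using \<Psi> sumE_mod_Suc_upd bij_betw_apply[OF \<alpha>] bij_betw_apply[OF \<beta>] by force
  moreover have "f \<in> ?\<Psi> ` {a + q |a q. a \<in> A \<and> q \<in> Q}"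
    if f: "f \<in> sumE_mod (Suc N) (ii(N := i)) (jj(N := j)) n" for f
  proof -
    obtain q where q: "q \<in> Q" "\<beta> q = f(N := 0)"
      using sumE_mod_SucD(1)[OF f] bij_betw_imp_surj_on[OF \<beta>] by (metis imageE)
    obtain a where a: "a \<in> A" "\<alpha> a = (\<lambda>k. if k = 0 then f N else 0)"
      using sumE_mod_SucD(2)[OF f] bij_betw_imp_surj_on[OF \<alpha>] by (metis imageE)
    have "?\<Psi> (a + q) = f"
      using \<Psi>[OF a(1) q(1)] q(2) a(2) by auto
    then show ?thesis
      using a(1) q(1) by blast
  qed
  ultimately show ?thesis
    unfolding bij_betw_def by blast
qed

lemma linear_on_direct_sum_upd:
  assumes sub: "subspace A" "subspace Q" "A \<inter> Q = {0}"
    and \<alpha>: "linear_on scale fscale A \<alpha>" and \<beta>: "linear_on scale fscale Q \<beta>"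
  shows "linear_on scale fscale {a + q |a q. a \<in> A \<and> q \<in> Q}
           (\<lambda>z. (\<beta> (z - component A Q z))(N := \<alpha> (component A Q z) 0))"
    (is "linear_on _ _ _ ?\<Psi>")
proof -
  have \<Psi>: "?\<Psi> (a + q) = (\<beta> q)(N := \<alpha> a 0)" if "a \<in> A" "q \<in> Q" for a q
    using component_eq[OF sub that] by simp
  show ?thesis
    unfolding linear_on_def
  proof (intro conjI ballI allI)
    fix z z' assume "z \<in> {a + q |a q. a \<in> A \<and> q \<in> Q}" "z' \<in> {a + q |a q. a \<in> A \<and> q \<in> Q}"
    then obtain a q a' q' where aq: "a \<in> A" "q \<in> Q" "a' \<in> A" "q' \<in> Q" and z: "z = a + q" "z' = a' + q'"
      by blast
    have "?\<Psi> (z + z') = ?\<Psi> ((a + a') + (q + q'))"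
      using z by (simp add: add_ac)
    also have "\<dots> = ?\<Psi> z + ?\<Psi> z'"
      using \<Psi>[OF subspace_add[OF sub(1) aq(1,3)] subspace_add[OF sub(2) aq(2,4)]] \<Psi>[OF aq(1,2)] \<Psi>[OF aq(3,4)]
        linear_on_add[OF \<alpha> aq(1,3)] linear_on_add[OF \<beta> aq(2,4)] z
      by (simp add: fun_eq_iff)
    finally show "?\<Psi> (z + z') = ?\<Psi> z + ?\<Psi> z'" .
  next
    fix c z assume "z \<in> {a + q |a q. a \<in> A \<and> q \<in> Q}"
    then obtain a q where aq: "a \<in> A" "q \<in> Q" and z: "z = a + q"
      by blast
    show "?\<Psi> (c *s z) = fscale c (?\<Psi> z)"
      using \<Psi>[OF subspace_scale[OF sub(1) aq(1)] subspace_scale[OF sub(2) aq(2)]] \<Psi>[OF aq]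
        linear_on_scale[OF \<alpha> aq(1)] linear_on_scale[OF \<beta> aq(2)] z
      by (simp add: scale_right_distrib fun_eq_iff fscale_def)
  qed
qed

text \<open>The coordinate of the summand \<open>A \<cong> \<Sigma>\<^sup>i E\<^sub>j\<close> goes into the new slot \<open>N\<close>.\<close>
lemma chain_iso_subcomplex_sum:
  assumes cc: "chain_complex scale X d" and sA: "subcomplex scale A X d" and sQ: "subcomplex scale Q X d"
    and disj: "\<And>n. A n \<inter> Q n = {0}"
    and isoA: "chain_iso scale A d fscale (sumE_mod 1 (\<lambda>_. i) (\<lambda>_. j)) (sumE_diff r (\<lambda>_. i))"
    and isoQ: "chain_iso scale Q d fscale (sumE_mod N ii jj) (sumE_diff r ii)"
  shows "chain_iso scale (subcomplex_sum A Q) d fscale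
           (sumE_mod (Suc N) (ii(N := i)) (jj(N := j))) (sumE_diff r (ii(N := i)))"
proof -
  obtain \<alpha> where \<alpha>bij: "\<And>n. bij_betw (\<alpha> n) (A n) (sumE_mod 1 (\<lambda>_. i) (\<lambda>_. j) n)"
    and \<alpha>lin: "\<And>n. linear_on scale fscale (A n) (\<alpha> n)"
    and \<alpha>d: "\<And>n a. a \<in> A (Suc n) \<Longrightarrow> \<alpha> n (d n a) = sumE_diff r (\<lambda>_. i) n (\<alpha> (Suc n) a)"
    using isoA unfolding chain_iso_def by blast
  obtain \<beta> where \<beta>bij: "\<And>n. bij_betw (\<beta> n) (Q n) (sumE_mod N ii jj n)"
    and \<beta>lin: "\<And>n. linear_on scale fscale (Q n) (\<beta> n)"
    and \<beta>d: "\<And>n q. q \<in> Q (Suc n) \<Longrightarrow> \<beta> n (d n q) = sumE_diff r ii n (\<beta> (Suc n) q)"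
    using isoQ unfolding chain_iso_def by blast
  note subA = subcomplexD(1)[OF sA] and subQ = subcomplexD(1)[OF sQ]
  define \<Psi> where "\<Psi> n z = (\<beta> n (z - component (A n) (Q n) z))(N := \<alpha> n (component (A n) (Q n) z) 0)"
    for n z
  have \<Psi>: "\<Psi> n (a + q) = (\<beta> n q)(N := \<alpha> n a 0)" if "a \<in> A n" "q \<in> Q n" for n a q
    unfolding \<Psi>_def using component_eq[OF subA subQ disj that] by simp
  have "bij_betw (\<Psi> n) (subcomplex_sum A Q n) (sumE_mod (Suc N) (ii(N := i)) (jj(N := j)) n)" for n
    unfolding \<Psi>_def subcomplex_sum_def using subA subQ disj \<alpha>bij \<beta>bij by (rule bij_betw_direct_sum_upd)
  moreover have "linear_on scale fscale (subcomplex_sum A Q n) (\<Psi> n)" for n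
    unfolding \<Psi>_def subcomplex_sum_def using subA subQ disj \<alpha>lin \<beta>lin by (rule linear_on_direct_sum_upd)
  moreover have "\<Psi> n (d n z) = sumE_diff r (ii(N := i)) n (\<Psi> (Suc n) z)"
    if z: "z \<in> subcomplex_sum A Q (Suc n)" for n z
  proof -
    obtain a q where aq: "z = a + q" "a \<in> A (Suc n)" "q \<in> Q (Suc n)"
      using z unfolding subcomplex_sum_def by blast
    have "d n z = d n a + d n q"
      using aq chain_complex_add[OF cc] subcomplexD(2)[OF sA] subcomplexD(2)[OF sQ] by blast
    then show ?thesis
      using aq \<Psi> subcomplexD(3)[OF sA] subcomplexD(3)[OF sQ] \<alpha>d \<beta>d by (simp add: sumE_diff_upd)
  qed
  ultimately show ?thesis
    unfolding chain_iso_def by blast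
qed

end

section \<open>Strands\<close>

text \<open>A strand in degrees \<open>i, \<dots>, i + j\<close>: vectors \<open>x\<^sub>l \<in> X\<^bsub>i+l\<^esub>\<close> and functionals \<open>\<phi>\<^sub>l\<close> with
  \<open>\<phi>\<^sub>l x\<^sub>l = 1\<close> such that both the lines \<open>R x\<^sub>l\<close> and the kernels of the \<open>\<phi>\<^sub>l\<close> are stable under \<open>d\<close>.\<close>
definition strand :: "('a::comm_ring_1 \<Rightarrow> 'm::ab_group_add \<Rightarrow> 'm) \<Rightarrow> (nat \<Rightarrow> 'm set) \<Rightarrow> (nat \<Rightarrow> 'm \<Rightarrow> 'm) \<Rightarrow>
    nat \<Rightarrow> nat \<Rightarrow> (nat \<Rightarrow> 'm) \<Rightarrow> (nat \<Rightarrow> 'm \<Rightarrow> 'a) \<Rightarrow> bool" where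
  "strand s X d i j x \<phi> \<longleftrightarrow>
    (\<forall>l\<le>j. x l \<in> X (i + l) \<and> linear_on s (*) (X (i + l)) (\<phi> l) \<and> \<phi> l (x l) = 1) \<and>
    (\<forall>l<j. \<exists>c. d (i + l) (x (Suc l)) = s c (x l)) \<and>
    (0 < i \<longrightarrow> d (i - 1) (x 0) = 0) \<and>
    (\<forall>l<j. \<forall>z\<in>X (Suc (i + l)). \<phi> (Suc l) z = 0 \<longrightarrow> \<phi> l (d (i + l) z) = 0) \<and>
    (\<forall>u\<in>X (Suc (i + j)). \<phi> j (d (i + j) u) = 0)"

definition strand_span :: "('a \<Rightarrow> 'm::zero \<Rightarrow> 'm) \<Rightarrow> nat \<Rightarrow> nat \<Rightarrow> (nat \<Rightarrow> 'm) \<Rightarrow> nat \<Rightarrow> 'm set" where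
  "strand_span s i j x n = (if i \<le> n \<and> n \<le> i + j then range (\<lambda>c. s c (x (n - i))) else {0})"

definition strand_kernel :: "(nat \<Rightarrow> 'm set) \<Rightarrow> nat \<Rightarrow> nat \<Rightarrow> (nat \<Rightarrow> 'm \<Rightarrow> 'a::zero) \<Rightarrow> nat \<Rightarrow> 'm set" where
  "strand_kernel X i j \<phi> n = (if i \<le> n \<and> n \<le> i + j then {z \<in> X n. \<phi> (n - i) z = 0} else X n)"

definition strand_coordinate :: "nat \<Rightarrow> nat \<Rightarrow> (nat \<Rightarrow> 'm \<Rightarrow> 'a::zero) \<Rightarrow> nat \<Rightarrow> 'm \<Rightarrow> nat \<Rightarrow> 'a" where
  "strand_coordinate i j \<phi> n a = (\<lambda>k. if k = 0 \<and> i \<le> n \<and> n \<le> i + j then \<phi> (n - i) a else 0)"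

context module
begin

lemma strandD:
  assumes "strand scale X d i j x \<phi>"
  shows "l \<le> j \<Longrightarrow> x l \<in> X (i + l)"
    and "l \<le> j \<Longrightarrow> linear_on scale (*) (X (i + l)) (\<phi> l)"
    and "l \<le> j \<Longrightarrow> \<phi> l (x l) = 1"
    and "l < j \<Longrightarrow> \<exists>c. d (i + l) (x (Suc l)) = c *s x l"
    and "0 < i \<Longrightarrow> d (i - 1) (x 0) = 0"
    and "l < j \<Longrightarrow> z \<in> X (Suc (i + l)) \<Longrightarrow> \<phi> (Suc l) z = 0 \<Longrightarrow> \<phi> l (d (i + l) z) = 0"
    and "u \<in> X (Suc (i + j)) \<Longrightarrow> \<phi> j (d (i + j) u) = 0"
  using assms unfolding strand_def by auto

lemma strandD_degree:
  assumes "strand scale X d i j x \<phi>" "i \<le> n" "n \<le> i + j"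
  shows "x (n - i) \<in> X n" "linear_on scale (*) (X n) (\<phi> (n - i))" "\<phi> (n - i) (x (n - i)) = 1"
  using strandD(1-3)[OF assms(1), of "n - i"] assms(2,3) by auto

lemma strand_x0_nonzero:
  assumes "chain_complex scale X d" "strand scale X d i j x \<phi>"
  shows "x 0 \<in> X i" "x 0 \<noteq> 0"
proof -
  show "x 0 \<in> X i"
    using strandD(1)[OF assms(2), of 0] by simp
  show "x 0 \<noteq> 0"
    using strandD(2,3)[OF assms(2), of 0] functional_zero[OF chain_complex_subspace[OF assms(1)]] by force
qed

lemma line_kernel_decomposition:
  assumes sub: "subspace M" and \<phi>: "linear_on scale (*) M \<phi>" and v: "v \<in> M" "\<phi> v = 1"
  shows "range (\<lambda>c. c *s v) \<inter> {x \<in> M. \<phi> x = 0} = {0}"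
    and "{p + q |p q. p \<in> range (\<lambda>c. c *s v) \<and> q \<in> {x \<in> M. \<phi> x = 0}} = M"
proof -
  have \<phi>v: "\<phi> (c *s v) = c" for c
    using linear_on_scale[OF \<phi> v(1)] v(2) by simp
  show "range (\<lambda>c. c *s v) \<inter> {x \<in> M. \<phi> x = 0} = {0}"
    using \<phi>v functional_zero[OF sub \<phi>] subspace_0[OF sub] by (auto intro: range_eqI[of _ _ 0])
  show "{p + q |p q. p \<in> range (\<lambda>c. c *s v) \<and> q \<in> {x \<in> M. \<phi> x = 0}} = M"
  proof
    show "{p + q |p q. p \<in> range (\<lambda>c. c *s v) \<and> q \<in> {x \<in> M. \<phi> x = 0}} \<subseteq> M"
      using subspace_add[OF sub] subspace_scale[OF sub v(1)] by auto
    show "M \<subseteq> {p + q |p q. p \<in> range (\<lambda>c. c *s v) \<and> q \<in> {x \<in> M. \<phi> x = 0}}"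
    proof
      fix z assume z: "z \<in> M"
      have "z - \<phi> z *s v \<in> {x \<in> M. \<phi> x = 0}"
        using z functional_diff[OF sub \<phi> z subspace_scale[OF sub v(1)]] \<phi>v subspace_diff[OF sub z]
          subspace_scale[OF sub v(1)] by simp
      then show "z \<in> {p + q |p q. p \<in> range (\<lambda>c. c *s v) \<and> q \<in> {x \<in> M. \<phi> x = 0}}"
        by (intro CollectI exI[of _ "\<phi> z *s v"] exI[of _ "z - \<phi> z *s v"]) auto
    qed
  qed
qed

lemma subcomplex_strand_span:
  assumes cc: "chain_complex scale X d" and st: "strand scale X d i j x \<phi>"
  shows "subcomplex scale (strand_span scale i j x) X d"
  unfolding subcomplex_def
proof (intro allI conjI)
  fix n
  show sub: "subspace (strand_span scale i j x n)"
    unfolding strand_span_def using span_singleton subspace_span[of "{x (n - i)}"]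
    by (auto simp: subspace_def)
  show "strand_span scale i j x n \<subseteq> X n"
    unfolding strand_span_def
    using strandD_degree(1)[OF st] subspace_scale[OF chain_complex_subspace[OF cc]]
      subspace_0[OF chain_complex_subspace[OF cc]] by auto
  have "d n (c *s x (Suc n - i)) \<in> strand_span scale i j x n"
    if n: "i \<le> Suc n" "Suc n \<le> i + j" for c
  proof (cases "i \<le> n")
    case True
    then obtain l where "n = i + l"
      using le_iff_add by blast
    then have l: "n = i + l" "l < j" "Suc n - i = Suc l"
      using n by auto
    obtain c' where "d n (x (Suc l)) = c' *s x l"
      using strandD(4)[OF st l(2)] l(1) by blast
    then show ?thesis
      unfolding strand_span_def using strandD(1)[OF st, of "Suc l"] l True chain_complex_scale[OF cc]
      by (auto intro: range_eqI[of _ _ "c * c'"])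
  next
    case False
    then have "Suc n = i"
      using n by simp
    then have "d n (x 0) = 0"
      using strandD(5)[OF st] by auto
    then show ?thesis
      using \<open>Suc n = i\<close> strandD(1)[OF st, of 0] chain_complex_scale[OF cc] subspace_0[OF sub] by simp
  qed
  then show "d n ` strand_span scale i j x (Suc n) \<subseteq> strand_span scale i j x n"
    unfolding strand_span_def[of _ _ _ _ "Suc n"]
    using chain_complex_zero[OF cc] subspace_0[OF sub] by (auto split: if_splits)
qed

lemma subcomplex_strand_kernel:
  assumes cc: "chain_complex scale X d" and st: "strand scale X d i j x \<phi>"
  shows "subcomplex scale (strand_kernel X i j \<phi>) X d"
  unfolding subcomplex_def
proof (intro allI conjI)
  fix n
  show "subspace (strand_kernel X i j \<phi> n)"
    unfolding strand_kernel_def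
    using subspace_kernel_on[OF chain_complex_subspace[OF cc] strandD_degree(2)[OF st]]
      chain_complex_subspace[OF cc] by simp
  show "strand_kernel X i j \<phi> n \<subseteq> X n"
    unfolding strand_kernel_def by auto
  have "\<phi> (n - i) (d n z) = 0"
    if n: "i \<le> n" "n \<le> i + j" and z: "z \<in> strand_kernel X i j \<phi> (Suc n)" for z
  proof (cases "n = i + j")
    case True
    then show ?thesis
      using strandD(7)[OF st] z unfolding strand_kernel_def by (auto split: if_splits)
  next
    case False
    then obtain l where l: "n = i + l" "l < j"
      using n le_Suc_ex by fastforce
    then show ?thesis
      using strandD(6)[OF st l(2)] z unfolding strand_kernel_def by (auto split: if_splits)
  qed
  moreover have "z \<in> X (Suc n)" if "z \<in> strand_kernel X i j \<phi> (Suc n)" for z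
    using that unfolding strand_kernel_def by (auto split: if_splits)
  ultimately show "d n ` strand_kernel X i j \<phi> (Suc n) \<subseteq> strand_kernel X i j \<phi> n"
    using chain_complex_d_mem[OF cc] unfolding strand_kernel_def[of _ _ _ _ n] by auto
qed

lemma complex_direct_sum_strand:
  assumes cc: "chain_complex scale X d" and st: "strand scale X d i j x \<phi>"
  shows "complex_direct_sum scale X d (strand_span scale i j x) (strand_kernel X i j \<phi>)"
proof -
  have "strand_span scale i j x n \<inter> strand_kernel X i j \<phi> n = {0} \<and>
      {p + q |p q. p \<in> strand_span scale i j x n \<and> q \<in> strand_kernel X i j \<phi> n} = X n" for n
  proof (cases "i \<le> n \<and> n \<le> i + j")
    case True
    then have "x (n - i) \<in> X n" "linear_on scale (*) (X n) (\<phi> (n - i))" "\<phi> (n - i) (x (n - i)) = 1"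
      using strandD_degree[OF st] by auto
    then show ?thesis
      unfolding strand_span_def strand_kernel_def
      using True line_kernel_decomposition[OF chain_complex_subspace[OF cc]] by simp
  next
    case False
    then show ?thesis
      unfolding strand_span_def strand_kernel_def using subspace_0[OF chain_complex_subspace[OF cc]] by auto
  qed
  then show ?thesis
    unfolding complex_direct_sum_def
    using subcomplex_strand_span[OF cc st] subcomplex_strand_kernel[OF cc st] by blast
qed

lemma chain_acyclic_strand_span:
  assumes cc: "chain_complex scale X d" and st: "strand scale X d i 1 x \<phi>" and dx: "d i (x 1) = x 0"
  shows "chain_acyclic (strand_span scale i 1 x) d"
  unfolding chain_acyclic_def
proof (intro allI subsetI)
  fix n z assume z: "z \<in> cycles (strand_span scale i 1 x) d n"
  have x1: "x 1 \<in> X (Suc i)"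
    using strandD(1)[OF st, of 1] by simp
  have zero: "0 \<in> d n ` strand_span scale i 1 x (Suc n)"
    using subspace_0[OF subcomplexD(1)[OF subcomplex_strand_span[OF cc st]]]
    by (rule image_eqI[rotated]) (simp add: chain_complex_zero[OF cc])
  consider "n = i" | "n = Suc i" | "n \<noteq> i" "n \<noteq> Suc i"
    by blast
  then show "z \<in> d n ` strand_span scale i 1 x (Suc n)"
  proof cases
    case 1
    then obtain c where "z = c *s x 0"
      using z unfolding cycles_def strand_span_def by (auto split: if_splits)
    then have "z = d n (c *s x 1)"
      using 1 dx chain_complex_scale[OF cc x1] by simp
    then show ?thesis
      using 1 unfolding strand_span_def by auto
  next
    case 2
    then obtain c where c: "z = c *s x 1" "d i z = 0"
      using z unfolding cycles_def strand_span_def by (auto split: if_splits)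
    have "d i z = c *s x 0"
      using c(1) dx chain_complex_scale[OF cc x1] by simp
    then have "\<phi> 0 (d i z) = c"
      using linear_on_scale[OF strandD(2)[OF st, of 0] strandD(1)[OF st, of 0]] strandD(3)[OF st, of 0] by simp
    then have "z = 0"
      using c functional_zero[OF chain_complex_subspace[OF cc] strandD(2)[OF st, of 0]] by simp
    then show ?thesis
      using zero by simp
  next
    case 3
    then have "z = 0"
      using z unfolding cycles_def strand_span_def by (auto split: if_splits)
    then show ?thesis
      using zero by simp
  qed
qed

lemma bij_betw_line_coordinate:
  assumes \<phi>: "linear_on scale (*) M \<phi>" and v: "v \<in> M" "\<phi> v = 1"
  shows "bij_betw (\<lambda>a k. if k = 0 then \<phi> a else 0) (range (\<lambda>c. c *s v)) (range (\<lambda>c k::nat. if k = 0 then c else 0))"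
proof -
  have line: "(\<lambda>k::nat. if k = 0 then \<phi> (c *s v) else 0) = (\<lambda>k. if k = 0 then c else 0)" for c
    by (simp add: linear_on_scale[OF \<phi> v(1)] v(2) cong: if_cong)
  have "inj_on (\<lambda>a k. if k = 0 then \<phi> a else 0) (range (\<lambda>c. c *s v))"
    by (rule inj_on_inverseI[where g = "\<lambda>h. h 0 *s v"]) (auto simp: linear_on_scale[OF \<phi> v(1)] v(2))
  then show ?thesis
    unfolding bij_betw_def using line by (simp add: image_image)
qed

lemma strand_coordinate_line:
  assumes st: "strand scale X d i j x \<phi>" and n: "i \<le> n" "n \<le> i + j"
  shows "strand_coordinate i j \<phi> n (c *s x (n - i)) = (\<lambda>k. if k = 0 then c else 0)"
  using strandD_degree[OF st n] n unfolding strand_coordinate_def by (simp add: linear_on_scale cong: if_cong)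

lemma strand_coordinate_zero:
  assumes cc: "chain_complex scale X d" and st: "strand scale X d i j x \<phi>"
  shows "strand_coordinate i j \<phi> n 0 = (\<lambda>k. 0)"
  using strandD_degree(2)[OF st] functional_zero[OF chain_complex_subspace[OF cc]]
  unfolding strand_coordinate_def by (auto simp: fun_eq_iff)

lemma bij_betw_strand_coordinate:
  assumes cc: "chain_complex scale X d" and st: "strand scale X d i j x \<phi>"
  shows "bij_betw (strand_coordinate i j \<phi> n) (strand_span scale i j x n) (sumE_mod 1 (\<lambda>_. i) (\<lambda>_. j) n)"
proof (cases "i \<le> n \<and> n \<le> i + j")
  case True
  then have "strand_coordinate i j \<phi> n = (\<lambda>a k. if k = 0 then \<phi> (n - i) a else 0)"
    unfolding strand_coordinate_def by (simp add: fun_eq_iff)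
  moreover have "sumE_mod 1 (\<lambda>_. i) (\<lambda>_. j) n = range (\<lambda>(c::'a) k. if k = 0 then c else 0)"
    using True sumE_mod_one_in_range by blast
  moreover have "bij_betw (\<lambda>a k. if k = 0 then \<phi> (n - i) a else 0) (range (\<lambda>c. c *s x (n - i)))
      (range (\<lambda>c k::nat. if k = 0 then c else 0))"
    using True bij_betw_line_coordinate[OF strandD_degree(2,1,3)[OF st]] by blast
  ultimately show ?thesis
    using True unfolding strand_span_def by simp
next
  case False
  then show ?thesis
    unfolding strand_span_def if_not_P[OF False] sumE_mod_one_out[OF False]
    by (simp add: strand_coordinate_zero[OF cc st] zero_fun_def)
qed

lemma linear_on_strand_coordinate:
  assumes cc: "chain_complex scale X d" and st: "strand scale X d i j x \<phi>"
  shows "linear_on scale fscale (strand_span scale i j x n) (strand_coordinate i j \<phi> n)"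
proof (cases "i \<le> n \<and> n \<le> i + j")
  case True
  have "linear_on scale (*) (strand_span scale i j x n) (\<phi> (n - i))"
    using True strandD_degree(2)[OF st] subcomplexD(2)[OF subcomplex_strand_span[OF cc st]]
    by (blast intro: linear_on_subset)
  then show ?thesis
    using True unfolding linear_on_def strand_coordinate_def fscale_def by (simp add: fun_eq_iff)
qed (auto simp: strand_coordinate_def linear_on_def fscale_def)

lemma strand_coordinate_differential:
  assumes cc: "chain_complex scale X d" and st: "strand scale X d i j x \<phi>"
    and dx: "\<forall>l<j. d (i + l) (x (Suc l)) = ((-1) ^ i * r) *s x l"
    and a: "a \<in> strand_span scale i j x (Suc n)"
  shows "strand_coordinate i j \<phi> n (d n a) = sumE_diff r (\<lambda>_. i) n (strand_coordinate i j \<phi> (Suc n) a)"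
proof (cases "i \<le> Suc n \<and> Suc n \<le> i + j")
  case in_range: True
  then obtain c where c: "a = c *s x (Suc n - i)"
    using a unfolding strand_span_def by auto
  show ?thesis
  proof (cases "i \<le> n")
    case True
    then obtain l where l: "n = i + l"
      using le_iff_add by blast
    then have "l < j" "Suc n - i = Suc l"
      using in_range by auto
    moreover have "x (Suc l) \<in> X (Suc n)"
      using strandD(1)[OF st, of "Suc l"] l \<open>l < j\<close> by simp
    ultimately have "d n a = (c * ((-1) ^ i * r)) *s x (n - i)"
      using c l dx chain_complex_scale[OF cc] by simp
    then have "strand_coordinate i j \<phi> n (d n a) = (\<lambda>k. if k = 0 then c * ((-1) ^ i * r) else 0)"
      using strand_coordinate_line[OF st True] l \<open>l < j\<close> by simp
    moreover have "strand_coordinate i j \<phi> (Suc n) a = (\<lambda>k. if k = 0 then c else 0)"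
      unfolding c using in_range by (intro strand_coordinate_line[OF st]) auto
    ultimately show ?thesis
      using True by (simp add: sumE_diff_def fun_eq_iff mult_ac)
  next
    case False
    then have "Suc n = i"
      using in_range by simp
    then have "d n a = 0"
      using c strandD(1)[OF st, of 0] strandD(5)[OF st] chain_complex_scale[OF cc] by auto
    then show ?thesis
      using strand_coordinate_zero[OF cc st] False unfolding sumE_diff_def by simp
  qed
next
  case False
  then have "a = 0"
    using a unfolding strand_span_def by auto
  then show ?thesis
    by (simp add: strand_coordinate_zero[OF cc st] sumE_diff_def chain_complex_zero[OF cc])
qed

lemma chain_iso_strand_span:
  assumes cc: "chain_complex scale X d" and st: "strand scale X d i j x \<phi>"
    and dx: "\<forall>l<j. d (i + l) (x (Suc l)) = ((-1) ^ i * r) *s x l"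
  shows "chain_iso scale (strand_span scale i j x) d fscale (sumE_mod 1 (\<lambda>_. i) (\<lambda>_. j)) (sumE_diff r (\<lambda>_. i))"
  unfolding chain_iso_def
  using bij_betw_strand_coordinate[OF cc st] linear_on_strand_coordinate[OF cc st]
    strand_coordinate_differential[OF cc st dx] by blast

end

section \<open>Finding strands\<close>

definition r_chain :: "('a::comm_ring_1 \<Rightarrow> 'm::ab_group_add \<Rightarrow> 'm) \<Rightarrow> (nat \<Rightarrow> 'm set) \<Rightarrow> (nat \<Rightarrow> 'm \<Rightarrow> 'm) \<Rightarrow>
    'a \<Rightarrow> nat \<Rightarrow> nat \<Rightarrow> (nat \<Rightarrow> 'm) \<Rightarrow> bool" where
  "r_chain s X d c i l x \<longleftrightarrow> (\<forall>k\<le>l. x k \<in> X (i + k)) \<and> (\<forall>k<l. d (i + k) (x (Suc k)) = s c (x k))"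

lemma r_chain_mono: "r_chain s X d c i l x \<Longrightarrow> k \<le> l \<Longrightarrow> r_chain s X d c i k x"
  unfolding r_chain_def by auto

definition functional_chain :: "('a::comm_ring_1 \<Rightarrow> 'm::ab_group_add \<Rightarrow> 'm) \<Rightarrow> (nat \<Rightarrow> 'm set) \<Rightarrow>
    (nat \<Rightarrow> 'm \<Rightarrow> 'm) \<Rightarrow> 'a \<Rightarrow> nat \<Rightarrow> (nat \<Rightarrow> 'm \<Rightarrow> 'a) \<Rightarrow> bool" where
  "functional_chain s X d c i \<Phi> \<longleftrightarrow> (\<forall>l. linear_on s (*) (X (i + l)) (\<Phi> l)) \<and>
     (\<forall>l. \<forall>z\<in>X (Suc (i + l)). \<Phi> l (d (i + l) z) = c * \<Phi> (Suc l) z)"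

context sq_zero_module
begin

lemma has_dual_basis_strand_kernel:
  assumes st: "strand s X d i j x \<phi>" and db: "has_dual_basis s (X n) k"
  shows "has_dual_basis s (strand_kernel X i j \<phi> n) (if i \<le> n \<and> n \<le> i + j then k - 1 else k)"
    and "i \<le> n \<Longrightarrow> n \<le> i + j \<Longrightarrow> 1 \<le> k"
  using has_dual_basis_kernel[OF db strandD_degree(2,1,3)[OF st]] db
  unfolding strand_kernel_def by auto

text \<open>If \<open>d y\<close> is not divisible by \<open>r\<close>, a functional \<open>\<pi>\<close> with \<open>\<pi> (d y) = 1\<close> splits off the
  acyclic strand \<open>y \<mapsto> d y\<close>, with functionals \<open>\<pi> \<circ> d\<close> and \<open>\<pi>\<close>.\<close>
lemma strand_if_not_r_multiple:
  assumes cc: "chain_complex s X d" and db: "has_dual_basis s (X n) k" and y: "y \<in> X (Suc n)"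
    and nr: "\<forall>z\<in>X n. d n y \<noteq> s r z"
  obtains x \<phi> where "strand s X d n 1 x \<phi>" "d n (x 1) = x 0"
proof -
  have dy: "d n y \<in> X n"
    using chain_complex_d_mem[OF cc y] .
  obtain \<pi> where \<pi>: "linear_on s (*) (X n) \<pi>" "\<pi> (d n y) = 1"
    using functional_one_if_not_r_multiple[OF db dy nr] by blast
  define x where "x l = (if l = 0 then d n y else y)" for l :: nat
  define \<phi> where "\<phi> l = (if l = 0 then \<pi> else (\<lambda>z. \<pi> (d n z)))" for l :: nat
  have "linear_on s (*) (X (Suc n)) (\<lambda>z. \<pi> (d n z))"
    using functional_comp_differential[OF cc \<pi>(1)] .
  moreover have "0 < n \<Longrightarrow> d (n - 1) (d n y) = 0"
    using chain_complex_dd[OF cc, of y "n - 1"] y by (cases n) auto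
  ultimately have "strand s X d n 1 x \<phi>"
    unfolding strand_def x_def \<phi>_def
    using dy y \<pi> chain_complex_dd[OF cc] functional_zero[OF chain_complex_subspace[OF cc] \<pi>(1)]
    by (auto simp: le_Suc_eq intro: exI[of _ 1] split: nat.splits)
  then show ?thesis
    using that unfolding x_def by simp
qed

lemma r_chain_exists:
  assumes cc: "chain_complex s X d" and minimal: "\<forall>n. \<forall>y\<in>X (Suc n). \<exists>z\<in>X n. d n y = s r z"
    and e: "e * e = 1" and u: "u \<in> X (i + l)"
  obtains x where "r_chain s X d (e * r) i l x" "x l = u"
  using u
proof (induct l arbitrary: u thesis)
  case 0
  show ?case
    by (rule 0(1)[of "\<lambda>_. u"]) (use 0(2) in \<open>auto simp: r_chain_def\<close>)
next
  case (Suc l)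
  obtain z where z: "z \<in> X (i + l)" "d (i + l) u = s r z"
    using minimal Suc(3) by auto
  have "e * r * e = r"
    using e by (metis mult.commute mult.left_commute mult_1_right)
  then have "d (i + l) u = s (e * r) (s e z)"
    using z(2) by simp
  moreover obtain x where x: "r_chain s X d (e * r) i l x" "x l = s e z"
    using Suc(1) subspace_scale[OF chain_complex_subspace[OF cc] z(1)] by blast
  ultimately have "r_chain s X d (e * r) i (Suc l) (x(Suc l := u))"
    using Suc(3) unfolding r_chain_def by (auto simp: less_Suc_eq le_Suc_eq)
  then show ?case
    using Suc(2) by simp
qed

text \<open>In a minimal complex every \<open>\<Phi>\<^sub>l \<circ> d\<close> takes values in \<open>(r)\<close> and can therefore be
  divided by \<open>\<plusminus>r\<close>.\<close>
lemma functional_chain_exists: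
  assumes cc: "chain_complex s X d" and db: "\<forall>n. has_dual_basis s (X n) (g n)"
    and minimal: "\<forall>n. \<forall>y\<in>X (Suc n). \<exists>z\<in>X n. d n y = s r z"
    and e: "e * e = 1" and \<pi>: "linear_on s (*) (X i) \<pi>"
  obtains \<Phi> where "\<Phi> 0 = \<pi>" "functional_chain s X d (e * r) i \<Phi>"
proof -
  have step: "\<exists>\<psi>. linear_on s (*) (X (i + Suc l)) \<psi> \<and> (\<forall>z\<in>X (Suc (i + l)). f (d (i + l) z) = e * r * \<psi> z)"
    if f: "linear_on s (*) (X (i + l)) f" for l f
  proof -
    have lin: "linear_on s (*) (X (Suc (i + l))) (\<lambda>z. e * f (d (i + l) z))"
      using functional_comp_differential[OF cc f] by (rule linear_on_mult_left)
    have "e * f (d (i + l) z) \<in> mm" if z: "z \<in> X (Suc (i + l))" for z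
    proof -
      obtain w where "w \<in> X (i + l)" "d (i + l) z = s r w"
        using minimal z by blast
      then have "e * f (d (i + l) z) = r * (e * f w)"
        using linear_on_scale[OF f] by (simp add: mult.left_commute)
      then show ?thesis
        unfolding mem_mm_iff by blast
    qed
    then obtain \<psi> where \<psi>: "linear_on s (*) (X (Suc (i + l))) \<psi>"
      "\<forall>z\<in>X (Suc (i + l)). e * f (d (i + l) z) = r * \<psi> z"
      using functional_divide_by_r[OF db[rule_format] lin] by blast
    have "f (d (i + l) z) = e * r * \<psi> z" if "z \<in> X (Suc (i + l))" for z
    proof -
      have "e * (e * f (d (i + l) z)) = e * (r * \<psi> z)"
        using \<psi>(2) that by simp
      then show ?thesis
        using e by (simp add: mult.assoc[symmetric])
    qed
    then show ?thesis
      using \<psi>(1) by (intro exI[of _ \<psi>]) simp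
  qed
  have "\<exists>\<Phi>. \<forall>l. (linear_on s (*) (X (i + l)) (\<Phi> l) \<and> (l = 0 \<longrightarrow> \<Phi> l = \<pi>)) \<and>
      (\<forall>z\<in>X (Suc (i + l)). \<Phi> l (d (i + l) z) = e * r * \<Phi> (Suc l) z)"
    using \<pi> step by (intro dependent_nat_choice) auto
  then obtain \<Phi> where \<Phi>: "\<forall>l. (linear_on s (*) (X (i + l)) (\<Phi> l) \<and> (l = 0 \<longrightarrow> \<Phi> l = \<pi>)) \<and>
      (\<forall>z\<in>X (Suc (i + l)). \<Phi> l (d (i + l) z) = e * r * \<Phi> (Suc l) z)"
    by blast
  show ?thesis
    by (rule that[of \<Phi>]) (use \<Phi> in \<open>simp_all add: functional_chain_def\<close>)
qed

lemma functional_chain_r_chain_congruent: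
  assumes r: "r \<noteq> 0" and e: "e * e = 1" and \<Phi>: "functional_chain s X d (e * r) i \<Phi>"
    and x: "r_chain s X d (e * r) i l x"
  shows "\<Phi> l (x l) - \<Phi> 0 (x 0) \<in> mm"
  using x
proof (induct l)
  case 0
  then show ?case
    by (simp add: zero_mem_mm)
next
  case (Suc l)
  have x: "x (Suc l) \<in> X (Suc (i + l))" "x l \<in> X (i + l)" "d (i + l) (x (Suc l)) = s (e * r) (x l)"
    using Suc(2) unfolding r_chain_def by auto
  have lin: "linear_on s (*) (X (i + l)) (\<Phi> l)"
    and "\<Phi> l (d (i + l) (x (Suc l))) = e * r * \<Phi> (Suc l) (x (Suc l))"
    using \<Phi> x(1) unfolding functional_chain_def by blast+
  then have "e * r * \<Phi> (Suc l) (x (Suc l)) = e * r * \<Phi> l (x l)"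
    using x(3) linear_on_scale[OF lin x(2)] by simp
  then have "e * (e * (r * (\<Phi> (Suc l) (x (Suc l)) - \<Phi> l (x l)))) = 0"
    by (simp add: algebra_simps)
  then have "r * (\<Phi> (Suc l) (x (Suc l)) - \<Phi> l (x l)) = 0"
    using e by (simp add: mult.assoc[symmetric])
  then have "\<Phi> (Suc l) (x (Suc l)) - \<Phi> l (x l) \<in> mm"
    using mem_mm_if_r_mult_eq_0 r by blast
  from add_mem_mm[OF this Suc(1)[OF r_chain_mono[OF Suc(2)]]] show ?case
    by simp
qed

text \<open>Rescaling the \<open>\<Phi>\<^sub>l\<close> by the inverses of the units \<open>\<Phi>\<^sub>l x\<^sub>l\<close> turns an \<open>r\<close>-chain into a
  strand, provided the chain cannot be prolonged in the sense of \<open>top\<close>.\<close>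
lemma strand_of_r_chain:
  assumes \<Phi>: "functional_chain s X d c i \<Phi>" and x: "r_chain s X d c i j x"
    and units: "\<And>l. l \<le> j \<Longrightarrow> \<exists>v. \<Phi> l (x l) * v = 1"
    and top: "\<And>u. u \<in> X (Suc (i + j)) \<Longrightarrow> c * \<Phi> (Suc j) u = 0"
    and bottom: "0 < i \<Longrightarrow> d (i - 1) (x 0) = 0"
  obtains \<phi> where "strand s X d i j x \<phi>"
proof -
  have \<Phi>lin: "linear_on s (*) (X (i + l)) (\<Phi> l)"
    and \<Phi>d: "z \<in> X (Suc (i + l)) \<Longrightarrow> \<Phi> l (d (i + l) z) = c * \<Phi> (Suc l) z" for l z
    using \<Phi> unfolding functional_chain_def by auto
  obtain v where v: "\<And>l. l \<le> j \<Longrightarrow> \<Phi> l (x l) * v l = 1"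
    using units by metis
  define \<phi> where "\<phi> l z = v l * \<Phi> l z" for l z
  have kernel: "\<phi> l (d (i + l) z) = 0" if "l < j" "z \<in> X (Suc (i + l))" "\<phi> (Suc l) z = 0" for l z
  proof -
    have "\<Phi> (Suc l) (x (Suc l)) * v (Suc l) * \<Phi> (Suc l) z = 0"
      using that(3) unfolding \<phi>_def by (simp add: mult.assoc)
    then have "\<Phi> (Suc l) z = 0"
      using v[of "Suc l"] that(1) by simp
    then show ?thesis
      using \<Phi>d[OF that(2)] unfolding \<phi>_def by simp
  qed
  have "strand s X d i j x \<phi>"
    unfolding strand_def
  proof (intro conjI allI impI ballI)
    fix l assume "l \<le> j"
    then show "x l \<in> X (i + l)" "linear_on s (*) (X (i + l)) (\<phi> l)" "\<phi> l (x l) = 1"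
      using x v \<Phi>lin unfolding r_chain_def \<phi>_def by (auto intro: linear_on_mult_left simp: mult.commute)
  next
    fix l assume "l < j"
    then show "\<exists>c'. d (i + l) (x (Suc l)) = s c' (x l)"
      using x unfolding r_chain_def by blast
  next
    fix u assume "u \<in> X (Suc (i + j))"
    then show "\<phi> j (d (i + j) u) = 0"
      using \<Phi>d top unfolding \<phi>_def by simp
  qed (use bottom kernel in auto)
  then show ?thesis
    by (rule that)
qed

lemma functional_chain_unit_along:
  assumes r: "r \<noteq> 0" and e: "e * e = 1" and \<Phi>: "functional_chain s X d (e * r) i \<Phi>"
    and x: "r_chain s X d (e * r) i l x" "\<Phi> 0 (x 0) \<notin> mm"
  shows "\<Phi> l (x l) \<notin> mm"
proof
  assume "\<Phi> l (x l) \<in> mm"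
  from diff_mem_mm[OF this functional_chain_r_chain_congruent[OF r e \<Phi> x(1)]]
  show False
    using x(2) by simp
qed

lemma r_chain_length_bound:
  assumes cc: "chain_complex s X d" and fin: "\<forall>n\<ge>N. X n = {0}"
    and r: "r \<noteq> 0" and e: "e * e = 1" and \<Phi>: "functional_chain s X d (e * r) i \<Phi>"
    and x: "r_chain s X d (e * r) i l x" "\<Phi> 0 (x 0) \<notin> mm"
  shows "i + l < N"
proof -
  have "\<Phi> l 0 = 0"
    using \<Phi> functional_zero[OF chain_complex_subspace[OF cc]] unfolding functional_chain_def by blast
  then have "x l \<noteq> 0"
    using functional_chain_unit_along[OF r e \<Phi> x] zero_mem_mm by auto
  moreover have "x l \<in> X (i + l)"
    using x(1) unfolding r_chain_def by simp
  ultimately show ?thesis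
    using fin not_less by blast
qed

text \<open>A longest \<open>r\<close>-chain starting at a unit of \<open>\<Phi>\<^sub>0\<close> exists because \<open>X\<close> is bounded; along
  it the \<open>\<Phi>\<^sub>l\<close> stay units, and maximality means that \<open>\<Phi>\<^bsub>j+1\<^esub>\<close> has values in \<open>(r)\<close>, since
  every element of a minimal complex starts an \<open>r\<close>-chain downwards.\<close>
lemma longest_r_chain:
  assumes cc: "chain_complex s X d" and fin: "\<forall>n\<ge>N. X n = {0}"
    and minimal: "\<forall>n. \<forall>y\<in>X (Suc n). \<exists>z\<in>X n. d n y = s r z"
    and r: "r \<noteq> 0" and e: "e * e = 1" and \<Phi>: "functional_chain s X d (e * r) i \<Phi>"
    and x0: "x0 \<in> X i" "\<Phi> 0 x0 \<notin> mm"
  obtains j x where "r_chain s X d (e * r) i j x" "\<forall>l\<le>j. \<Phi> l (x l) \<notin> mm"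
    "\<forall>u\<in>X (Suc (i + j)). \<Phi> (Suc j) u \<in> mm"
proof -
  define L where "L = {l. \<exists>x. r_chain s X d (e * r) i l x \<and> \<Phi> 0 (x 0) \<notin> mm}"
  have "L \<subseteq> {..<N - i}"
  proof
    fix l assume "l \<in> L"
    then obtain x where "r_chain s X d (e * r) i l x" "\<Phi> 0 (x 0) \<notin> mm"
      unfolding L_def by blast
    then have "i + l < N"
      by (rule r_chain_length_bound[OF cc fin r e \<Phi>])
    then show "l \<in> {..<N - i}"
      by simp
  qed
  then have finL: "finite L"
    by (rule finite_subset) simp
  have "0 \<in> L"
    unfolding L_def r_chain_def using x0 by (intro CollectI exI[of _ "\<lambda>_. x0"]) simp
  define j where "j = Max L"
  obtain x where x: "r_chain s X d (e * r) i j x" "\<Phi> 0 (x 0) \<notin> mm"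
    using Max_in[OF finL] \<open>0 \<in> L\<close> unfolding j_def L_def by blast
  have "\<Phi> (Suc j) u \<in> mm" if u: "u \<in> X (Suc (i + j))" for u
  proof (rule ccontr)
    assume u_unit: "\<Phi> (Suc j) u \<notin> mm"
    obtain y where y: "r_chain s X d (e * r) i (Suc j) y" "y (Suc j) = u"
      using r_chain_exists[OF cc minimal e] u by (metis add_Suc_right)
    have "\<Phi> 0 (y 0) \<notin> mm"
    proof
      assume "\<Phi> 0 (y 0) \<in> mm"
      from add_mem_mm[OF functional_chain_r_chain_congruent[OF r e \<Phi> y(1)] this]
      show False
        using y(2) u_unit by simp
    qed
    then have "Suc j \<in> L"
      unfolding L_def using y(1) by blast
    then show False
      using Max_ge[OF finL] unfolding j_def by fastforce
  qed
  moreover have "\<forall>l\<le>j. \<Phi> l (x l) \<notin> mm"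
    using functional_chain_unit_along[OF r e \<Phi>] r_chain_mono x by blast
  ultimately show ?thesis
    using that x(1) by blast
qed

lemma strand_if_minimal:
  assumes cc: "chain_complex s X d" and db: "\<forall>n. has_dual_basis s (X n) (g n)"
    and fin: "\<forall>n\<ge>N. X n = {0}" and minimal: "\<forall>n. \<forall>y\<in>X (Suc n). \<exists>z\<in>X n. d n y = s r z"
    and Xi: "X i \<noteq> {0}" and below: "\<forall>n<i. X n = {0}"
  obtains j x \<phi> where "strand s X d i j x \<phi>" "\<forall>l<j. d (i + l) (x (Suc l)) = s ((-1) ^ i * r) (x l)"
proof -
  define e :: 'a where "e = (-1) ^ i"
  have e: "e * e = 1"
    unfolding e_def by (simp flip: power_mult_distrib)
  obtain x0 where x0: "x0 \<in> X i" "\<forall>z\<in>X i. x0 \<noteq> s r z"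
    by (rule exists_not_r_multiple[OF chain_complex_subspace[OF cc] Xi])
  obtain \<pi> where \<pi>: "linear_on s (*) (X i) \<pi>" "\<pi> x0 = 1"
    by (rule functional_one_if_not_r_multiple[OF db[rule_format] x0])
  obtain \<Phi> where \<Phi>0: "\<Phi> 0 = \<pi>" and \<Phi>: "functional_chain s X d (e * r) i \<Phi>"
    by (rule functional_chain_exists[OF cc db minimal e \<pi>(1)])
  have "\<exists>j x. r_chain s X d (e * r) i j x \<and> (\<forall>l\<le>j. \<Phi> l (x l) \<notin> mm) \<and>
      (\<forall>u\<in>X (Suc (i + j)). e * r * \<Phi> (Suc j) u = 0)"
  proof (cases "r = 0")
    case True
    then show ?thesis
      using x0(1) \<pi>(2) \<Phi>0 one_notin_mm unfolding r_chain_def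
      by (intro exI[of _ 0] exI[of _ "\<lambda>_. x0"]) auto
  next
    case False
    obtain j x where x: "r_chain s X d (e * r) i j x" "\<forall>l\<le>j. \<Phi> l (x l) \<notin> mm"
      and top: "\<forall>u\<in>X (Suc (i + j)). \<Phi> (Suc j) u \<in> mm"
      by (rule longest_r_chain[OF cc fin minimal False e \<Phi> x0(1)]) (use \<pi>(2) \<Phi>0 one_notin_mm in simp)
    have "\<forall>u\<in>X (Suc (i + j)). e * r * \<Phi> (Suc j) u = 0"
      using top r_mult_mm by (simp add: mult.assoc)
    then show ?thesis
      using x by blast
  qed
  then obtain j x where x: "r_chain s X d (e * r) i j x" and nonunit: "\<forall>l\<le>j. \<Phi> l (x l) \<notin> mm"
    and top: "\<forall>u\<in>X (Suc (i + j)). e * r * \<Phi> (Suc j) u = 0"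
    by blast
  have "\<exists>v. \<Phi> l (x l) * v = 1" if "l \<le> j" for l
    using unit_if_notin_mm nonunit that by metis
  moreover have "x 0 \<in> X i"
    using x unfolding r_chain_def by (metis add_0_right le0)
  then have "0 < i \<Longrightarrow> d (i - 1) (x 0) = 0"
    using chain_complex_d_mem[OF cc, of "x 0" "i - 1"] below by simp
  ultimately obtain \<phi> where "strand s X d i j x \<phi>"
    using strand_of_r_chain[OF \<Phi> x] top by blast
  moreover have "\<forall>l<j. d (i + l) (x (Suc l)) = s ((-1) ^ i * r) (x l)"
    using x unfolding r_chain_def e_def by simp
  ultimately show ?thesis
    by (rule that)
qed

lemma exists_split_strand:
  assumes cc: "chain_complex s X d" and db: "\<forall>n. has_dual_basis s (X n) (g n)"
    and fin: "\<forall>n\<ge>N. X n = {0}" and nonzero: "\<exists>n. X n \<noteq> {0}"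
  obtains i j x \<phi> where "strand s X d i j x \<phi>"
    "chain_acyclic (strand_span s i j x) d \<or>
     chain_iso s (strand_span s i j x) d fscale (sumE_mod 1 (\<lambda>_. i) (\<lambda>_. j)) (sumE_diff r (\<lambda>_. i))"
proof (cases "\<forall>n. \<forall>y\<in>X (Suc n). \<exists>z\<in>X n. d n y = s r z")
  case minimal: True
  define i where "i = (LEAST n. X n \<noteq> {0})"
  have "X i \<noteq> {0}"
    unfolding i_def using nonzero by (rule LeastI_ex)
  moreover have "\<forall>n<i. X n = {0}"
    unfolding i_def using not_less_Least by blast
  ultimately obtain j x \<phi> where st: "strand s X d i j x \<phi>"
    and dx: "\<forall>l<j. d (i + l) (x (Suc l)) = s ((-1) ^ i * r) (x l)"
    by (rule strand_if_minimal[OF cc db fin minimal])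
  show ?thesis
    using chain_iso_strand_span[OF cc st dx] by (intro that[OF st]) simp
next
  case False
  then obtain n y where y: "y \<in> X (Suc n)" "\<forall>z\<in>X n. d n y \<noteq> s r z"
    by blast
  obtain x \<phi> where st: "strand s X d n 1 x \<phi>" and dx: "d n (x 1) = x 0"
    by (rule strand_if_not_r_multiple[OF cc db[rule_format] y])
  show ?thesis
    using chain_acyclic_strand_span[OF cc st dx] by (intro that[OF st]) simp
qed

end

definition has_E_decomposition :: "('a::comm_ring_1 \<Rightarrow> 'm::ab_group_add \<Rightarrow> 'm) \<Rightarrow> 'a \<Rightarrow> (nat \<Rightarrow> 'm set) \<Rightarrow>
    (nat \<Rightarrow> 'm \<Rightarrow> 'm) \<Rightarrow> bool" where
  "has_E_decomposition s r X d \<longleftrightarrow> (\<exists>P Q. complex_direct_sum s X d P Q \<and> chain_acyclic P d \<and>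
     (\<exists>N ii jj. chain_iso s Q d fscale (sumE_mod N ii jj) (sumE_diff r ii)))"

context module
begin

lemma has_E_decomposition_zero:
  assumes "chain_complex scale X d" "\<forall>n. X n = {0}"
  shows "has_E_decomposition scale r X d"
  unfolding has_E_decomposition_def
  using complex_direct_sum_zero[OF assms(1)] chain_acyclic_zero[OF assms] chain_iso_zero by blast

lemma has_E_decomposition_extend_acyclic:
  assumes cc: "chain_complex scale X d" and XA: "complex_direct_sum scale X d A Y"
    and A: "chain_acyclic A d" and Y: "has_E_decomposition scale r Y d"
  shows "has_E_decomposition scale r X d"
proof -
  obtain P Q where YPQ: "complex_direct_sum scale Y d P Q" and P: "chain_acyclic P d"
    and Q: "\<exists>N ii jj. chain_iso scale Q d fscale (sumE_mod N ii jj) (sumE_diff r ii)"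
    using Y unfolding has_E_decomposition_def by blast
  have "subcomplex scale P Y d"
    using YPQ unfolding complex_direct_sum_def by blast
  then show ?thesis
    unfolding has_E_decomposition_def
    using complex_direct_sum_assoc[OF cc XA YPQ] chain_acyclic_subcomplex_sum[OF cc XA _ A P] Q by blast
qed

lemma has_E_decomposition_extend_E:
  assumes cc: "chain_complex scale X d" and XA: "complex_direct_sum scale X d A Y"
    and A: "chain_iso scale A d fscale (sumE_mod 1 (\<lambda>_. i) (\<lambda>_. j)) (sumE_diff r (\<lambda>_. i))"
    and Y: "has_E_decomposition scale r Y d"
  shows "has_E_decomposition scale r X d"
proof -
  obtain P Q N ii jj where YPQ: "complex_direct_sum scale Y d P Q" and P: "chain_acyclic P d"
    and Q: "chain_iso scale Q d fscale (sumE_mod N ii jj) (sumE_diff r ii)"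
    using Y unfolding has_E_decomposition_def by blast
  have sA: "subcomplex scale A X d" and sY: "subcomplex scale Y X d" and AY: "\<And>n. A n \<inter> Y n = {0}"
    and sQ: "subcomplex scale Q Y d"
    using XA YPQ unfolding complex_direct_sum_def by auto
  have "A n \<inter> Q n = {0}" for n
    using AY[of n] subcomplexD(2)[OF sQ, of n] subspace_0[OF subcomplexD(1)[OF sQ]] by blast
  then have "chain_iso scale (subcomplex_sum A Q) d fscale
      (sumE_mod (Suc N) (ii(N := i)) (jj(N := j))) (sumE_diff r (ii(N := i)))"
    using chain_iso_subcomplex_sum[OF cc sA subcomplex_trans[OF sQ sY] _ A Q] by blast
  moreover have "complex_direct_sum scale X d P (subcomplex_sum A Q)"
    using complex_direct_sum_commute[OF complex_direct_sum_assoc[OF cc XA complex_direct_sum_commute[OF YPQ]]] .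
  ultimately show ?thesis
    unfolding has_E_decomposition_def using P by blast
qed

end

context sq_zero_module
begin

lemma strand_kernel_rank_less:
  assumes cc: "chain_complex s X d" and st: "strand s X d i j x \<phi>" and fin: "\<forall>n\<ge>N. X n = {0}"
    and db: "\<forall>n. has_dual_basis s (X n) (g n)"
  obtains g' where "\<forall>n. has_dual_basis s (strand_kernel X i j \<phi> n) (g' n)" "(\<Sum>n<N. g' n) < (\<Sum>n<N. g n)"
proof
  define g' where "g' n = (if i \<le> n \<and> n \<le> i + j then g n - 1 else g n)" for n
  show "\<forall>n. has_dual_basis s (strand_kernel X i j \<phi> n) (g' n)"
    unfolding g'_def using has_dual_basis_strand_kernel(1)[OF st] db by blast
  have "i < N"
  proof (rule ccontr)
    assume "\<not> i < N"
    then show False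
      using strand_x0_nonzero[OF cc st] fin by simp
  qed
  moreover have "1 \<le> g i"
    using has_dual_basis_strand_kernel(2)[OF st db[rule_format], of i] by simp
  ultimately show "(\<Sum>n<N. g' n) < (\<Sum>n<N. g n)"
    unfolding g'_def by (intro sum_strict_mono_ex1) (auto intro!: bexI[of _ i])
qed

text \<open>Induction on the total rank \<open>\<Sum>\<^sub>n<N g n\<close>: splitting off a strand lowers the rank in each of
  its degrees by one.\<close>
lemma has_E_decomposition_if_dual_bases:
  assumes "chain_complex s X d" "\<forall>n\<ge>N. X n = {0}" "\<forall>n. has_dual_basis s (X n) (g n)"
  shows "has_E_decomposition s r X d"
  using assms
proof (induct "\<Sum>n<N. g n" arbitrary: X g rule: less_induct)
  case less
  note cc = less(2) and fin = less(3) and db = less(4)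
  show ?case
  proof (cases "\<forall>n. X n = {0}")
    case True
    then show ?thesis
      using has_E_decomposition_zero[OF cc] by blast
  next
    case False
    then obtain i j x \<phi> where st: "strand s X d i j x \<phi>"
      and split: "chain_acyclic (strand_span s i j x) d \<or>
        chain_iso s (strand_span s i j x) d fscale (sumE_mod 1 (\<lambda>_. i) (\<lambda>_. j)) (sumE_diff r (\<lambda>_. i))"
      using exists_split_strand[OF cc db fin] by blast
    define Y where "Y = strand_kernel X i j \<phi>"
    obtain g' where db': "\<forall>n. has_dual_basis s (Y n) (g' n)" and less_rank: "(\<Sum>n<N. g' n) < (\<Sum>n<N. g n)"
      unfolding Y_def by (rule strand_kernel_rank_less[OF cc st fin db])
    have XAY: "complex_direct_sum s X d (strand_span s i j x) Y"
      unfolding Y_def using complex_direct_sum_strand[OF cc st] .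
    have sY: "subcomplex s Y X d"
      using XAY unfolding complex_direct_sum_def by blast
    have "\<forall>n\<ge>N. Y n = {0}"
      using fin subcomplexD(2)[OF sY] subspace_0[OF subcomplexD(1)[OF sY]] by blast
    then have "has_E_decomposition s r Y d"
      using less(1)[OF less_rank chain_complex_subcomplex[OF cc sY] _ db'] by blast
    then show ?thesis
      using split has_E_decomposition_extend_acyclic[OF cc XAY] has_E_decomposition_extend_E[OF cc XAY]
      by blast
  qed
qed

end

theorem lemma5p2:
  fixes m :: "'a::comm_ring_1 set" and r :: 'a
    and s :: "'a \<Rightarrow> 'm::ab_group_add \<Rightarrow> 'm"
    and X :: "nat \<Rightarrow> 'm set" and d :: "nat \<Rightarrow> 'm \<Rightarrow> 'm"
  assumes local: "maximal_ideal m" "\<forall>J. maximal_ideal J \<longrightarrow> J = m"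
    and principal: "m = {r * a | a. True}"
    and sq_zero: "\<forall>x\<in>m. \<forall>y\<in>m. x * y = 0"
    and perf: "perfect_complex s X d"
  shows "\<exists>P Q. complex_direct_sum s X d P Q \<and> chain_acyclic P d \<and>
           (\<exists>N ii jj. chain_iso s Q d fscale (sumE_mod N ii jj) (sumE_diff r ii))"
proof -
  have cc: "chain_complex s X d"
    using perf unfolding perfect_complex_def by blast
  then have "module s"
    unfolding chain_complex_def by blast
  then interpret sq_zero_module m r s
    by (intro sq_zero_module.intro sq_zero_principal_maximal.intro local(1) principal sq_zero)
  have "\<exists>k. has_dual_basis s (X n) k" for n
  proof -
    have "projective_mod s (X n)" "fin_gen s (X n)"
      using perf unfolding perfect_complex_def by auto
    then obtain k where "has_dual_basis s (X n) k"
      by (rule has_dual_basis_if_projective)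
    then show ?thesis ..
  qed
  then obtain g where g: "\<forall>n. has_dual_basis s (X n) (g n)"
    by metis
  obtain N where N: "\<forall>n\<ge>N. X n = {0}"
    using perf unfolding perfect_complex_def by blast
  show ?thesis
    using has_E_decomposition_if_dual_bases[OF cc N g] unfolding has_E_decomposition_def .
qed

end
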